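(* For $n\ge 2$, every diagram $\mathfrak a\in\mathscr{A}_n$ either lies in (the image under $\epsilon_n$ of) $\mathscr{A}_{n-1}$, or is of the form $\mathfrak a=\mathfrak a'\,\mathfrak x\,\mathfrak b'$ with $\mathfrak a',\mathfrak b'\in\mathscr{A}_{n-1}$ and $\mathfrak x\in\{\mathfrak g_{n-1},\mathfrak e_{n-1},\mathfrak u_n\}$. In particular, $\mathbb{A}_n$ is generated as an algebra by $S_n$, $\mathfrak e_{n-1}$ and $\mathfrak u_n$, and $\mathbb{L}_n$ is generated by $S_n$ and $\mathfrak u_n$.
   Context: Let $K$ be a field, $x$ an element transcendental or algebraic over $K$, $F=K(x)$. $\mathscr{A}_n$ is the set of graphs on $\{1,\dots,n\}\cup\{1',\dots,n'\}$ (top row $1,\dots,n$, bottom row $1',\dots,n'$) in which every vertex has degree $0$ or $1$; degree-$0$ vertices carry loops. Arcs within a row are horizontal, arcs between rows are vertical. Product: stack $\mathfrak a$ above $\mathfrak b$, identifying bottom vertex $i'$ of $\mathfrak a$ with top vertex $i$ of $\mathfrak b$; $\ell(\mathfrak a,\mathfrak b)$ is the number of connected components lying entirely in the middle row, $G'(\mathfrak a,\mathfrak b)$ is the diagram on the outer rows joining two vertices iff they are connected by a path, and $\mathfrak a\mathfrak b=x^{\ell(\mathfrak a,\mathfrak b)}G'(\mathfrak a,\mathfrak b)$; this gives the algebra $\mathbb{A}_n$ with basis $\mathscr{A}_n$, and $\mathbb{L}_n$ is the subalgebra spanned by diagrams without horizontal arcs. $S_n$ is identified with diagrams having $n$ vertical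 arcs. $\epsilon_n\colon\mathbb{A}_{n-1}\to\mathbb{A}_n$ adds the vertices $n,n'$ joined by the vertical arc $(n,n')$. $\mathfrak e_i$ has arcs $(k,k')$ for $k\ne i,i+1$ plus horizontal arcs $(i,i+1)$ and $(i',(i+1)')$; $\mathfrak u_i$ has arcs $(k,k')$ for $k\neq i$ and $i,i'$ isolated; $\mathfrak g_i$ has arcs $(k,k')$ for $k\ne i,i+1$ plus $(i,(i+1)')$ and $(i+1,i')$. *)

theory Defs
  imports Main
begin

text \<open>Vertices: top row T 1..T n, bottom row B 1..B n (B i stands for i').
  A diagram is a set of arcs (two-element vertex sets), pairwise disjoint;
  vertices not covered by an arc are the degree-0 (loop-carrying) vertices.\<close>

datatype vtx = T nat | B nat

type_synonym diagram = "vtx set set"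

definition verts :: "nat \<Rightarrow> vtx set" where
  "verts n = {T i | i. 1 \<le> i \<and> i \<le> n} \<union> {B i | i. 1 \<le> i \<and> i \<le> n}"

definition rb :: "nat \<Rightarrow> diagram set" where
  "rb n = {D. (\<forall>e\<in>D. \<exists>u v. u \<in> verts n \<and> v \<in> verts n \<and> u \<noteq> v \<and> e = {u, v})
              \<and> (\<forall>e\<in>D. \<forall>e'\<in>D. e \<noteq> e' \<longrightarrow> e \<inter> e' = {})}"

definition vertical_arc :: "vtx set \<Rightarrow> bool" where
  "vertical_arc e \<longleftrightarrow> (\<exists>i j. e = {T i, B j})"

definition horizontal_arc :: "vtx set \<Rightarrow> bool" where
  "horizontal_arc e \<longleftrightarrow> (\<exists>i j. e = {T i, T j} \<or> e = {B i, B j})"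

datatype svtx = Up nat | Mid nat | Low nat

fun upper :: "vtx \<Rightarrow> svtx" where
  "upper (T i) = Up i" | "upper (B i) = Mid i"

fun lower :: "vtx \<Rightarrow> svtx" where
  "lower (T i) = Mid i" | "lower (B i) = Low i"

fun outer :: "vtx \<Rightarrow> svtx" where
  "outer (T i) = Up i" | "outer (B i) = Low i"

definition stack_edge :: "diagram \<Rightarrow> diagram \<Rightarrow> svtx \<Rightarrow> svtx \<Rightarrow> bool" where
  "stack_edge a b u w \<longleftrightarrow> (\<exists>e\<in>a. upper ` e = {u, w}) \<or> (\<exists>e\<in>b. lower ` e = {u, w})"

definition conn :: "diagram \<Rightarrow> diagram \<Rightarrow> svtx \<Rightarrow> svtx \<Rightarrow> bool" where
  "conn a b = (stack_edge a b)\<^sup>*\<^sup>*"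

definition comp :: "diagram \<Rightarrow> diagram \<Rightarrow> diagram" where
  "comp a b = {{u, v} | u v. u \<noteq> v \<and> conn a b (outer u) (outer v)}"

definition loops :: "nat \<Rightarrow> diagram \<Rightarrow> diagram \<Rightarrow> nat" where
  "loops n a b = card {C. \<exists>i\<in>{1..n}. C = {w. conn a b (Mid i) w} \<and> (\<forall>w\<in>C. \<exists>j. w = Mid j)}"

definition alg :: "nat \<Rightarrow> (diagram \<Rightarrow> 'k::field) set" where
  "alg n = {f. \<forall>D. D \<notin> rb n \<longrightarrow> f D = 0}"

definition basis :: "diagram \<Rightarrow> diagram \<Rightarrow> 'k::field" where
  "basis D = (\<lambda>c. if c = D then 1 else 0)"

definition mult :: "'k::field \<Rightarrow> nat \<Rightarrow> (diagram \<Rightarrow> 'k) \<Rightarrow> (diagram \<Rightarrow> 'k) \<Rightarrow> diagram \<Rightarrow> 'k" where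
  "mult x n f g = (\<lambda>c. \<Sum>a\<in>rb n. \<Sum>b\<in>rb n.
      if comp a b = c then f a * g b * x ^ loops n a b else 0)"

definition lalg :: "nat \<Rightarrow> (diagram \<Rightarrow> 'k::field) set" where
  "lalg n = {f \<in> alg n. \<forall>D. (\<exists>e\<in>D. horizontal_arc e) \<longrightarrow> f D = 0}"

definition idd :: "nat \<Rightarrow> diagram" where
  "idd n = {{T k, B k} | k. 1 \<le> k \<and> k \<le> n}"

definition perms :: "nat \<Rightarrow> diagram set" where
  "perms n = {D \<in> rb n. card D = n \<and> (\<forall>e\<in>D. vertical_arc e)}"

definition eps :: "nat \<Rightarrow> diagram \<Rightarrow> diagram" where
  "eps n D = insert {T n, B n} D"

definition ee :: "nat \<Rightarrow> nat \<Rightarrow> diagram" where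
  "ee n i = {{T k, B k} | k. 1 \<le> k \<and> k \<le> n \<and> k \<noteq> i \<and> k \<noteq> i + 1}
            \<union> {{T i, T (i + 1)}, {B i, B (i + 1)}}"

definition uu :: "nat \<Rightarrow> nat \<Rightarrow> diagram" where
  "uu n i = {{T k, B k} | k. 1 \<le> k \<and> k \<le> n \<and> k \<noteq> i}"

definition gg :: "nat \<Rightarrow> nat \<Rightarrow> diagram" where
  "gg n i = {{T k, B k} | k. 1 \<le> k \<and> k \<le> n \<and> k \<noteq> i \<and> k \<noteq> i + 1}
            \<union> {{T i, B (i + 1)}, {T (i + 1), B i}}"

inductive_set subalg :: "'k::field \<Rightarrow> nat \<Rightarrow> (diagram \<Rightarrow> 'k) set \<Rightarrow> (diagram \<Rightarrow> 'k) set"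
  for x n G where
  gen: "g \<in> G \<Longrightarrow> g \<in> subalg x n G"
| one: "basis (idd n) \<in> subalg x n G"
| smult: "f \<in> subalg x n G \<Longrightarrow> (\<lambda>c. r * f c) \<in> subalg x n G"
| add: "f \<in> subalg x n G \<Longrightarrow> g \<in> subalg x n G \<Longrightarrow> (\<lambda>c. f c + g c) \<in> subalg x n G"
| mul: "f \<in> subalg x n G \<Longrightarrow> g \<in> subalg x n G \<Longrightarrow> mult x n f g \<in> subalg x n G"

end

theory Submission
  imports Defs "HOL-Combinatorics.Transposition"
begin

text \<open>A diagram is encoded by the involution sending each vertex to the other end of its arc,
  and a composite is computed by following alternating walks through the stacked graph.
  Let a be a diagram that is the identity on the columns after m, with m and m' not joined.
  After permuting one row, a = (P y) Q where P and Q are the identity on the columns from m on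
  and y is g(m-1) if m or m' lies on a vertical strand, e(m-1) if it lies on a horizontal arc
  (right multiplication by e(p) joins the former partners of p' and (p+1)' to each other), and
  u(m) if m and m' are both isolated.  The cases where the relevant vertex lies in the top row are
  the mirror images, under the top-bottom flip, of those in the bottom row.  For m = n this is the
  decomposition; induction on m, with e(p) and u(m) conjugate by permutations to e(n-1) and u(n),
  gives the generators, and diagrams without horizontal arcs never require e.\<close>

section \<open>Diagrams as involutions\<close>

lemma verts_T [simp]: "T k \<in> verts n \<longleftrightarrow> 1 \<le> k \<and> k \<le> n"
  unfolding verts_def by auto

lemma verts_B [simp]: "B k \<in> verts n \<longleftrightarrow> 1 \<le> k \<and> k \<le> n"
  unfolding verts_def by auto

lemma rb_arcD: "D \<in> rb n \<Longrightarrow> e \<in> D \<Longrightarrow> \<exists>u v. u \<in> verts n \<and> v \<in> verts n \<and> u \<noteq> v \<and> e = {u, v}"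
  unfolding rb_def by blast

lemma rb_arcs_disjoint: "D \<in> rb n \<Longrightarrow> e \<in> D \<Longrightarrow> e' \<in> D \<Longrightarrow> e \<noteq> e' \<Longrightarrow> e \<inter> e' = {}"
  unfolding rb_def by blast

lemma rb_arc_unique:
  assumes "D \<in> rb n" "{v, w} \<in> D" "{v, w'} \<in> D" "w \<noteq> v" "w' \<noteq> v"
  shows "w = w'"
proof (rule ccontr)
  assume "w \<noteq> w'"
  then have "{v, w} \<noteq> {v, w'}" using assms by (auto simp: doubleton_eq_iff)
  then show False using rb_arcs_disjoint[OF assms(1-3)] by blast
qed

lemma rb_arc_neq: "D \<in> rb n \<Longrightarrow> {v, w} \<in> D \<Longrightarrow> w \<noteq> v"
  using rb_arcD by (fastforce simp: doubleton_eq_iff)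

lemma rb_arc_verts: "D \<in> rb n \<Longrightarrow> {v, w} \<in> D \<Longrightarrow> v \<in> verts n \<and> w \<in> verts n"
  using rb_arcD by (fastforce simp: doubleton_eq_iff)

definition partner :: "diagram \<Rightarrow> vtx \<Rightarrow> vtx" where
  "partner D v = (if \<exists>w. w \<noteq> v \<and> {v, w} \<in> D then (THE w. w \<noteq> v \<and> {v, w} \<in> D) else v)"

definition partner_map :: "nat \<Rightarrow> (vtx \<Rightarrow> vtx) \<Rightarrow> bool" where
  "partner_map n \<pi> \<longleftrightarrow> (\<forall>v. \<pi> (\<pi> v) = v) \<and> (\<forall>v. \<pi> v \<noteq> v \<longrightarrow> v \<in> verts n)"

definition arcs_of :: "(vtx \<Rightarrow> vtx) \<Rightarrow> diagram" where
  "arcs_of \<pi> = {{v, \<pi> v} | v. \<pi> v \<noteq> v}"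

lemma partner_eqI:
  assumes D: "D \<in> rb n" and arc: "{v, w} \<in> D"
  shows "partner D v = w"
proof -
  have "w \<noteq> v" using rb_arc_neq[OF D arc] .
  have "(THE w'. w' \<noteq> v \<and> {v, w'} \<in> D) = w"
  proof (rule the_equality)
    show "w' = w" if "w' \<noteq> v \<and> {v, w'} \<in> D" for w'
      using rb_arc_unique[OF D _ arc] that \<open>w \<noteq> v\<close> by blast
  qed (use arc \<open>w \<noteq> v\<close> in blast)
  then show ?thesis unfolding partner_def using arc \<open>w \<noteq> v\<close> by auto
qed

lemma partner_eq_self: "\<not> (\<exists>w. w \<noteq> v \<and> {v, w} \<in> D) \<Longrightarrow> partner D v = v"
  unfolding partner_def by auto

lemma partner_arc:
  assumes "D \<in> rb n" "partner D v \<noteq> v"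
  shows "{v, partner D v} \<in> D"
proof -
  from assms(2) obtain w where "w \<noteq> v" "{v, w} \<in> D" unfolding partner_def by metis
  then show ?thesis using partner_eqI[OF assms(1)] by simp
qed

lemma partner_partner:
  assumes "D \<in> rb n"
  shows "partner D (partner D v) = v"
proof (cases "partner D v = v")
  case False
  then have "{partner D v, v} \<in> D" using partner_arc[OF assms] by (simp add: insert_commute)
  then show ?thesis using partner_eqI[OF assms] by blast
qed simp

lemma partner_sym: "D \<in> rb n \<Longrightarrow> partner D v = w \<Longrightarrow> partner D w = v"
  using partner_partner by metis

lemma partner_verts:
  assumes "D \<in> rb n" "partner D v \<noteq> v"
  shows "v \<in> verts n" "partner D v \<in> verts n"
  using partner_arc[OF assms] rb_arc_verts[OF assms(1)] by auto

lemma partner_outside: "D \<in> rb n \<Longrightarrow> v \<notin> verts n \<Longrightarrow> partner D v = v"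
  using partner_verts(1) by blast

lemma partner_range: "D \<in> rb n \<Longrightarrow> v \<in> verts n \<Longrightarrow> partner D v \<in> verts n"
  using partner_verts(2) by metis

lemma partner_T_range: "D \<in> rb n \<Longrightarrow> partner D v = T k \<Longrightarrow> partner D v \<noteq> v \<Longrightarrow> 1 \<le> k \<and> k \<le> n"
  using partner_verts(2) by fastforce

lemma partner_B_range: "D \<in> rb n \<Longrightarrow> partner D v = B k \<Longrightarrow> partner D v \<noteq> v \<Longrightarrow> 1 \<le> k \<and> k \<le> n"
  using partner_verts(2) by fastforce

lemma partner_map_partner: "D \<in> rb n \<Longrightarrow> partner_map n (partner D)"
  unfolding partner_map_def using partner_partner partner_verts by blast

lemma arcs_of_rb:
  assumes "partner_map n \<pi>"
  shows "arcs_of \<pi> \<in> rb n"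
proof -
  have inv: "\<And>v. \<pi> (\<pi> v) = v" and supp: "\<And>v. \<pi> v \<noteq> v \<Longrightarrow> v \<in> verts n"
    using assms unfolding partner_map_def by auto
  have "\<pi> v \<in> verts n" if "\<pi> v \<noteq> v" for v using supp inv that by metis
  then have arcs: "\<forall>e\<in>arcs_of \<pi>. \<exists>u v. u \<in> verts n \<and> v \<in> verts n \<and> u \<noteq> v \<and> e = {u, v}"
    unfolding arcs_of_def using supp by blast
  have "e \<inter> e' = {}" if ee': "e \<in> arcs_of \<pi>" "e' \<in> arcs_of \<pi>" "e \<noteq> e'" for e e'
  proof (rule ccontr)
    obtain v w where e: "e = {v, \<pi> v}" "e' = {w, \<pi> w}" using ee'(1,2) unfolding arcs_of_def by blast
    assume "e \<inter> e' \<noteq> {}"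
    then consider "v = w" | "v = \<pi> w" | "\<pi> v = w" | "\<pi> v = \<pi> w" using e by blast
    then have "{v, \<pi> v} = {w, \<pi> w}" using inv by cases (metis insert_commute)+
    then show False using e ee'(3) by simp
  qed
  with arcs show ?thesis unfolding rb_def by blast
qed

lemma partner_arcs_of:
  assumes "partner_map n \<pi>"
  shows "partner (arcs_of \<pi>) = \<pi>"
proof
  fix v
  have inv: "\<And>v. \<pi> (\<pi> v) = v" using assms unfolding partner_map_def by auto
  show "partner (arcs_of \<pi>) v = \<pi> v"
  proof (cases "\<pi> v = v")
    case True
    then have "\<not> (\<exists>w. w \<noteq> v \<and> {v, w} \<in> arcs_of \<pi>)"
      using inv unfolding arcs_of_def by (auto simp: doubleton_eq_iff)
    then show ?thesis using partner_eq_self True by metis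
  next
    case False
    then have "{v, \<pi> v} \<in> arcs_of \<pi>" unfolding arcs_of_def by blast
    then show ?thesis using partner_eqI arcs_of_rb[OF assms] by blast
  qed
qed

lemma arcs_of_partner:
  assumes D: "D \<in> rb n"
  shows "arcs_of (partner D) = D"
proof
  show "arcs_of (partner D) \<subseteq> D"
    unfolding arcs_of_def using partner_arc[OF D] by blast
  show "D \<subseteq> arcs_of (partner D)"
  proof
    fix e assume "e \<in> D"
    then obtain u v where "u \<noteq> v" "e = {u, v}" using rb_arcD[OF D] by blast
    then have "partner D u = v" "partner D u \<noteq> u" using partner_eqI[OF D] \<open>e \<in> D\<close> by auto
    then show "e \<in> arcs_of (partner D)" unfolding arcs_of_def using \<open>e = {u, v}\<close> by blast
  qed
qed

lemma diagram_eqI: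
  assumes "D1 \<in> rb n" "D2 \<in> rb m" "\<And>v. partner D1 v = partner D2 v"
  shows "D1 = D2"
proof -
  have "partner D1 = partner D2" using assms(3) ..
  then show ?thesis using arcs_of_partner[OF assms(1)] arcs_of_partner[OF assms(2)] by metis
qed

lemma arcs_of_eqI: assumes "\<And>e. e \<in> D \<Longrightarrow> \<exists>v. e = {v, \<pi> v} \<and> \<pi> v \<noteq> v"
  and "\<And>v. \<pi> v \<noteq> v \<Longrightarrow> {v, \<pi> v} \<in> D" shows "D = arcs_of \<pi>"
  unfolding arcs_of_def using assms by blast

section \<open>Composition by alternating walks\<close>

fun upper_move :: "diagram \<Rightarrow> svtx \<Rightarrow> svtx" where
  "upper_move a (Up i) = upper (partner a (T i))"
| "upper_move a (Mid i) = upper (partner a (B i))"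
| "upper_move a (Low i) = Low i"

fun lower_move :: "diagram \<Rightarrow> svtx \<Rightarrow> svtx" where
  "lower_move b (Up i) = Up i"
| "lower_move b (Mid i) = lower (partner b (T i))"
| "lower_move b (Low i) = lower (partner b (B i))"

lemma inj_upper: "inj upper"
proof (rule injI)
  show "upper x = upper y \<Longrightarrow> x = y" for x y by (cases x; cases y) auto
qed

lemma inj_lower: "inj lower"
proof (rule injI)
  show "lower x = lower y \<Longrightarrow> x = y" for x y by (cases x; cases y) auto
qed

lemma outer_inj: "outer x = outer y \<Longrightarrow> x = y"
  by (cases x; cases y) auto

lemma upper_move_upper: "upper_move a (upper x) = upper (partner a x)"
  by (cases x) auto

lemma lower_move_lower: "lower_move b (lower x) = lower (partner b x)"
  by (cases x) auto

lemma upper_move_upper_move: "a \<in> rb n \<Longrightarrow> upper_move a (upper_move a w) = w"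
  by (cases w) (simp_all add: upper_move_upper partner_partner)

lemma lower_move_lower_move: "b \<in> rb n \<Longrightarrow> lower_move b (lower_move b w) = w"
  by (cases w) (simp_all add: lower_move_lower partner_partner)

lemma embedded_arc_iff:
  assumes a: "a \<in> rb n" and h: "inj h"
    and move: "\<And>x. M (h x) = h (partner a x)" "\<And>u. u \<notin> range h \<Longrightarrow> M u = u"
  shows "(\<exists>e\<in>a. h ` e = {u, w}) \<longleftrightarrow> u \<noteq> w \<and> w = M u"
proof
  assume "\<exists>e\<in>a. h ` e = {u, w}"
  then obtain e where e: "e \<in> a" "h ` e = {u, w}" by blast
  then obtain x y where "e = {x, y}" using rb_arcD[OF a] by blast
  then have xy: "{x, y} \<in> a" "{h x, h y} = {u, w}" using e by auto
  have "h x \<noteq> h y" using rb_arc_neq[OF a xy(1)] inj_eq[OF h] by simp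
  moreover have "partner a x = y" "partner a y = x"
    using partner_eqI[OF a] xy(1) by (auto simp: insert_commute)
  moreover have "(u = h x \<and> w = h y) \<or> (u = h y \<and> w = h x)"
    using xy(2) by (auto simp: doubleton_eq_iff)
  ultimately show "u \<noteq> w \<and> w = M u" using move(1) by auto
next
  assume uw: "u \<noteq> w \<and> w = M u"
  then have "u \<in> range h" using move(2) by metis
  then obtain x where x: "u = h x" by blast
  then have "partner a x \<noteq> x" using uw move(1) by auto
  then have "{x, partner a x} \<in> a" by (rule partner_arc[OF a])
  moreover have "h ` {x, partner a x} = {u, w}" using uw x move(1) by simp
  ultimately show "\<exists>e\<in>a. h ` e = {u, w}" by blast
qed

definition step_rel :: "('a \<Rightarrow> 'a) \<Rightarrow> ('a \<Rightarrow> 'a) \<Rightarrow> 'a \<Rightarrow> 'a \<Rightarrow> bool" where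
  "step_rel f g x y \<longleftrightarrow> y = f x \<or> y = g x"

lemma step_rel_commute: "step_rel f g = step_rel g f"
  unfolding step_rel_def by (intro ext) blast

lemma stack_edge_iff:
  assumes "a \<in> rb n" "b \<in> rb n"
  shows "stack_edge a b u w \<longleftrightarrow> u \<noteq> w \<and> step_rel (upper_move a) (lower_move b) u w"
proof -
  have "upper_move a x = x" if "x \<notin> range upper" for x
  proof (cases x)
    case (Up i) then show ?thesis using that rangeI[of upper "T i"] by simp
  next
    case (Mid i) then show ?thesis using that rangeI[of upper "B i"] by simp
  qed simp
  then have "(\<exists>e\<in>a. upper ` e = {u, w}) \<longleftrightarrow> u \<noteq> w \<and> w = upper_move a u"
    by (rule embedded_arc_iff[OF assms(1) inj_upper upper_move_upper])
  moreover have "lower_move b x = x" if "x \<notin> range lower" for x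
  proof (cases x)
    case (Mid i) then show ?thesis using that rangeI[of lower "T i"] by simp
  next
    case (Low i) then show ?thesis using that rangeI[of lower "B i"] by simp
  qed simp
  then have "(\<exists>e\<in>b. lower ` e = {u, w}) \<longleftrightarrow> u \<noteq> w \<and> w = lower_move b u"
    by (rule embedded_arc_iff[OF assms(2) inj_lower lower_move_lower])
  ultimately show ?thesis unfolding stack_edge_def step_rel_def by blast
qed

lemma conn_iff:
  assumes "a \<in> rb n" "b \<in> rb n"
  shows "conn a b u w \<longleftrightarrow> (step_rel (upper_move a) (lower_move b))\<^sup>*\<^sup>* u w"
proof -
  have "stack_edge a b = inf (step_rel (upper_move a) (lower_move b)) (\<noteq>)"
    using stack_edge_iff[OF assms] by (auto simp: fun_eq_iff)
  then show ?thesis unfolding conn_def by (metis rtranclp_r_diff_Id)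
qed

lemma conn_sym: "conn a b x y \<Longrightarrow> conn a b y x"
proof -
  have "stack_edge a b y x" if "stack_edge a b x y" for x y
    using that unfolding stack_edge_def by (simp add: insert_commute)
  then have "symp (stack_edge a b)" by (rule sympI)
  then show "conn a b x y \<Longrightarrow> conn a b y x" unfolding conn_def by (rule sympD[OF symp_rtranclp])
qed

lemma conn_trans: "conn a b x y \<Longrightarrow> conn a b y z \<Longrightarrow> conn a b x z"
  unfolding conn_def by (rule rtranclp_trans)

lemma conn_upper_move: assumes "a \<in> rb n" "b \<in> rb n" shows "conn a b x (upper_move a x)"
  unfolding conn_iff[OF assms] step_rel_def by (rule r_into_rtranclp) simp

lemma conn_lower_move: assumes "a \<in> rb n" "b \<in> rb n" shows "conn a b x (lower_move b x)"
  unfolding conn_iff[OF assms] step_rel_def by (rule r_into_rtranclp) simp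

fun alt_walk :: "('a \<Rightarrow> 'a) \<Rightarrow> ('a \<Rightarrow> 'a) \<Rightarrow> 'a \<Rightarrow> nat \<Rightarrow> 'a" where
  "alt_walk f g u 0 = u"
| "alt_walk f g u (Suc k) = (if even k then f else g) (alt_walk f g u k)"

lemma alt_walk_reachable: "(step_rel f g)\<^sup>*\<^sup>* u (alt_walk f g u k)"
proof (induction k)
  case (Suc k)
  have "step_rel f g (alt_walk f g u k) (alt_walk f g u (Suc k))" unfolding step_rel_def by simp
  then show ?case by (rule rtranclp.rtrancl_into_rtrancl[OF Suc])
qed simp

text \<open>The move not taken at a step of the walk leads one step back, because both moves are
  involutions and the start is fixed by the second one.\<close>

lemma reachable_alt_walk:
  assumes f: "\<And>x. f (f x) = x" and g: "\<And>x. g (g x) = x" and gu: "g u = u"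
    and r: "(step_rel f g)\<^sup>*\<^sup>* u w"
  shows "\<exists>k. w = alt_walk f g u k"
  using r
proof (induction rule: rtranclp_induct)
  case base then show ?case by (rule exI[of _ 0]) simp
next
  case (step y z)
  then obtain k where y: "y = alt_walk f g u k" by blast
  have forward: "(if even k then f else g) y = alt_walk f g u (Suc k)" using y by simp
  have backward: "\<exists>j. (if even k then g else f) y = alt_walk f g u j"
  proof (cases k)
    case 0 then show ?thesis using y gu by (intro exI[of _ 0]) simp
  next
    case (Suc j) then show ?thesis using y f g by (intro exI[of _ j]) auto
  qed
  from step(2) have "z = f y \<or> z = g y" unfolding step_rel_def .
  then show ?case using forward backward by (cases "even k") metis+
qed

lemma alt_walk_segment_closed:
  assumes f: "\<And>x. f (f x) = x" and g: "\<And>x. g (g x) = x" and gu: "g u = u"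
    and Os: "\<And>x. x \<in> Os \<Longrightarrow> f x = x \<or> g x = x"
    and k: "0 < k" "alt_walk f g u k \<in> Os" "\<And>i. 0 < i \<Longrightarrow> i < k \<Longrightarrow> alt_walk f g u i \<notin> Os"
    and i: "i \<le> k"
  shows "f (alt_walk f g u i) \<in> alt_walk f g u ` {..k} \<and> g (alt_walk f g u i) \<in> alt_walk f g u ` {..k}"
proof -
  let ?S = "alt_walk f g u ` {..k}" and ?y = "alt_walk f g u i"
  define h where "h = (if even i then f else g)"
  define h' where "h' = (if even i then g else f)"
  have backward: "h' ?y \<in> ?S"
  proof (cases i)
    case 0 then show ?thesis using gu unfolding h'_def by (auto intro: image_eqI[of _ _ 0])
  next
    case (Suc j) then show ?thesis using i f g unfolding h'_def by auto
  qed
  have "h ?y \<in> ?S"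
  proof (cases "i < k")
    case True then show ?thesis unfolding h_def by (auto intro!: image_eqI[of _ _ "Suc i"])
  next
    case False
    then have ik: "i = k" using i by simp
    obtain j where j: "k = Suc j" using k(1) by (cases k) auto
    have "h ?y = ?y"
    proof (rule ccontr)
      assume "h ?y \<noteq> ?y"
      then have "h' ?y = ?y" using Os[of ?y] k(2) ik unfolding h_def h'_def by (auto split: if_splits)
      moreover have "h' ?y = alt_walk f g u j" using ik j f g unfolding h'_def by auto
      ultimately have yj: "alt_walk f g u j = ?y" by simp
      then have "j = 0" using k(2) k(3)[of j] ik j by auto
      then show False using \<open>h ?y \<noteq> ?y\<close> yj gu ik j unfolding h_def by simp
    qed
    then show ?thesis using i by auto
  qed
  moreover have "{f ?y, g ?y} = {h ?y, h' ?y}" unfolding h_def h'_def by auto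
  ultimately show ?thesis using backward by (auto simp: doubleton_eq_iff)
qed

lemma reachable_alt_walk_first_hit:
  assumes f: "\<And>x. f (f x) = x" and g: "\<And>x. g (g x) = x" and gu: "g u = u"
    and Os: "\<And>x. x \<in> Os \<Longrightarrow> f x = x \<or> g x = x"
    and k: "0 < k" "alt_walk f g u k \<in> Os" "\<And>i. 0 < i \<Longrightarrow> i < k \<Longrightarrow> alt_walk f g u i \<notin> Os"
    and r: "(step_rel f g)\<^sup>*\<^sup>* u w" and w: "w \<in> Os"
  shows "w = u \<or> w = alt_walk f g u k"
proof -
  have "w \<in> alt_walk f g u ` {..k}" using r
  proof (induction rule: rtranclp_induct)
    case base then show ?case by (auto intro: image_eqI[of _ _ 0])
  next
    case (step y z)
    then show ?case
      using alt_walk_segment_closed[OF f g gu Os k] unfolding step_rel_def by auto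
  qed
  then obtain i where "i \<le> k" "w = alt_walk f g u i" by blast
  then show ?thesis using k(3)[of i] w by (cases "i = 0 \<or> i = k") auto
qed

definition is_outer :: "svtx \<Rightarrow> bool" where "is_outer x \<longleftrightarrow> (\<exists>i. x = Up i) \<or> (\<exists>j. x = Low j)"

fun first_move :: "diagram \<Rightarrow> diagram \<Rightarrow> vtx \<Rightarrow> svtx \<Rightarrow> svtx" where
  "first_move a b (T i) = upper_move a" | "first_move a b (B j) = lower_move b"

fun second_move :: "diagram \<Rightarrow> diagram \<Rightarrow> vtx \<Rightarrow> svtx \<Rightarrow> svtx" where
  "second_move a b (T i) = lower_move b" | "second_move a b (B j) = upper_move a"

definition path_from :: "diagram \<Rightarrow> diagram \<Rightarrow> vtx \<Rightarrow> nat \<Rightarrow> svtx" where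
  "path_from a b v = alt_walk (first_move a b v) (second_move a b v) (outer v)"

lemma step_rel_moves:
  "step_rel (first_move a b v) (second_move a b v) = step_rel (upper_move a) (lower_move b)"
  by (cases v) (auto simp: step_rel_commute)

lemma second_move_outer: "second_move a b v (outer v) = outer v"
  by (cases v) auto

lemma is_outer_outer: "is_outer (outer v)"
  by (cases v) (auto simp: is_outer_def)

lemma moves_is_outer: "is_outer x \<Longrightarrow> first_move a b v x = x \<or> second_move a b v x = x"
  unfolding is_outer_def by (cases v) auto

lemma first_move_involution: "a \<in> rb n \<Longrightarrow> b \<in> rb n \<Longrightarrow> first_move a b v (first_move a b v x) = x"
  by (cases v) (auto simp: upper_move_upper_move lower_move_lower_move)

lemma second_move_involution: "a \<in> rb n \<Longrightarrow> b \<in> rb n \<Longrightarrow> second_move a b v (second_move a b v x) = x"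
  by (cases v) (auto simp: upper_move_upper_move lower_move_lower_move)

lemma conn_path_from:
  assumes "a \<in> rb n" "b \<in> rb n"
  shows "conn a b (outer v) (path_from a b v k)"
  using alt_walk_reachable[of "first_move a b v" "second_move a b v" "outer v" k]
  unfolding path_from_def step_rel_moves conn_iff[OF assms] .

lemma conn_path_fromE:
  assumes "a \<in> rb n" "b \<in> rb n" "conn a b (outer v) w"
  shows "\<exists>k. w = path_from a b v k"
  unfolding path_from_def
  by (rule reachable_alt_walk[OF first_move_involution[OF assms(1,2)] second_move_involution[OF assms(1,2)]
        second_move_outer])
     (use assms(3) in \<open>simp add: conn_iff[OF assms(1,2)] step_rel_moves\<close>)

lemma conn_outer_first_hit:
  assumes ab: "a \<in> rb n" "b \<in> rb n"
    and k: "0 < k" "is_outer (path_from a b v k)" "\<And>i. 0 < i \<Longrightarrow> i < k \<Longrightarrow> \<not> is_outer (path_from a b v i)"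
    and c: "conn a b (outer v) w" "is_outer w"
  shows "w = outer v \<or> w = path_from a b v k"
  using reachable_alt_walk_first_hit[of "first_move a b v" "second_move a b v" "outer v" "Collect is_outer" k w]
    first_move_involution[OF ab] second_move_involution[OF ab] second_move_outer moves_is_outer k c
  unfolding path_from_def conn_iff[OF ab] step_rel_moves by auto

lemma alt_walk_const: "f u = u \<Longrightarrow> g u = u \<Longrightarrow> alt_walk f g u k = u"
  by (induction k) auto

lemma conn_outer_outside:
  assumes ab: "a \<in> rb n" "b \<in> rb n" and v: "v \<notin> verts n" and c: "conn a b (outer v) w"
  shows "w = outer v"
proof -
  have "partner a v = v" "partner b v = v" using partner_outside ab v by auto
  then have "first_move a b v (outer v) = outer v" "second_move a b v (outer v) = outer v"
    by (cases v; simp)+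
  then have "path_from a b v k = outer v" for k unfolding path_from_def by (rule alt_walk_const)
  then show ?thesis using conn_path_fromE[OF ab c] by auto
qed

lemma conn_outer_unique:
  assumes ab: "a \<in> rb n" "b \<in> rb n"
    and c: "conn a b (outer x) (outer y)" "conn a b (outer x) (outer y')" and ne: "y \<noteq> x" "y' \<noteq> x"
  shows "y = y'"
proof (cases "\<exists>k. 0 < k \<and> is_outer (path_from a b x k)")
  case True
  define k where "k = (LEAST k. 0 < k \<and> is_outer (path_from a b x k))"
  have k: "0 < k" "is_outer (path_from a b x k)" unfolding k_def using LeastI_ex[OF True] by auto
  have first: "\<And>i. 0 < i \<Longrightarrow> i < k \<Longrightarrow> \<not> is_outer (path_from a b x i)"
    unfolding k_def using not_less_Least by blast
  have "outer y = path_from a b x k" "outer y' = path_from a b x k"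
    using conn_outer_first_hit[OF ab k first] c is_outer_outer ne outer_inj by blast+
  then show ?thesis using outer_inj by metis
next
  case False
  obtain i where i: "outer y = path_from a b x i" using conn_path_fromE[OF ab c(1)] by blast
  then have "i = 0" using False is_outer_outer by (metis gr0I)
  then show ?thesis using i ne outer_inj unfolding path_from_def by simp
qed

lemma comp_mem: "e \<in> comp a b \<longleftrightarrow> (\<exists>u v. e = {u, v} \<and> u \<noteq> v \<and> conn a b (outer u) (outer v))"
  unfolding comp_def by blast

lemma comp_arc_at:
  assumes "e \<in> comp a b" "z \<in> e"
  obtains w where "e = {z, w}" "w \<noteq> z" "conn a b (outer z) (outer w)"
proof -
  obtain u v where uv: "e = {u, v}" "u \<noteq> v" "conn a b (outer u) (outer v)"
    using assms(1) unfolding comp_mem by blast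
  then consider "z = u" | "z = v" using assms(2) by blast
  then show thesis
  proof cases
    case 1 then show thesis using that uv by blast
  next
    case 2 then show thesis using that[of u] uv conn_sym by (simp add: insert_commute)
  qed
qed

lemma comp_rb:
  assumes ab: "a \<in> rb n" "b \<in> rb n"
  shows "comp a b \<in> rb n"
  unfolding rb_def
proof (intro CollectI conjI ballI impI)
  fix e assume "e \<in> comp a b"
  then obtain u v where uv: "e = {u, v}" "u \<noteq> v" "conn a b (outer u) (outer v)"
    unfolding comp_mem by blast
  have "u \<in> verts n" using conn_outer_outside[OF ab _ uv(3)] uv(2) outer_inj by metis
  moreover have "v \<in> verts n" using conn_outer_outside[OF ab _ conn_sym[OF uv(3)]] uv(2) outer_inj by metis
  ultimately show "\<exists>u v. u \<in> verts n \<and> v \<in> verts n \<and> u \<noteq> v \<and> e = {u, v}" using uv by blast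
next
  fix e e' assume e: "e \<in> comp a b" "e' \<in> comp a b" "e \<noteq> e'"
  show "e \<inter> e' = {}"
  proof (rule ccontr)
    assume "e \<inter> e' \<noteq> {}"
    then obtain z where "z \<in> e" "z \<in> e'" by blast
    then obtain w w' where "e = {z, w}" "w \<noteq> z" "conn a b (outer z) (outer w)"
      "e' = {z, w'}" "w' \<noteq> z" "conn a b (outer z) (outer w')"
      using comp_arc_at e(1,2) by metis
    then show False using conn_outer_unique[OF ab] e(3) by metis
  qed
qed

lemma partner_comp_conn:
  assumes "a \<in> rb n" "b \<in> rb n" "w \<noteq> v" "conn a b (outer v) (outer w)"
  shows "partner (comp a b) v = w"
  using assms by (intro partner_eqI[OF comp_rb[OF assms(1,2)]]) (auto simp: comp_mem)

lemma partner_comp_first_hit: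
  assumes ab: "a \<in> rb n" "b \<in> rb n"
    and k: "0 < k" "path_from a b v k = outer w" "\<And>i. 0 < i \<Longrightarrow> i < k \<Longrightarrow> \<not> is_outer (path_from a b v i)"
  shows "partner (comp a b) v = w"
proof (cases "w = v")
  case False
  then show ?thesis using partner_comp_conn[OF ab] conn_path_from[OF ab, of v k] k(2) by simp
next
  case True
  have "\<not> (\<exists>w'. w' \<noteq> v \<and> {v, w'} \<in> comp a b)"
  proof
    assume "\<exists>w'. w' \<noteq> v \<and> {v, w'} \<in> comp a b"
    then obtain w' where "w' \<noteq> v" "conn a b (outer v) (outer w')"
      using comp_arc_at[of "{v, _}" a b v] by (metis doubleton_eq_iff insertI1)
    then show False
      using conn_outer_first_hit[OF ab k(1) _ k(3)] k(2) True is_outer_outer outer_inj by metis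
  qed
  then show ?thesis using partner_eq_self True by metis
qed

text \<open>In the following lemmas the index counts the middle-row vertices on the path joining
  a vertex of the composite to its partner.\<close>

lemma partner_comp_T0:
  assumes ab: "a \<in> rb n" "b \<in> rb n"
    and p: "partner a (T i) = T i'"
  shows "partner (comp a b) (T i) = T i'"
  by (rule partner_comp_first_hit[OF ab, of "Suc 0"]) (auto simp: path_from_def p)

lemma partner_comp_T1:
  assumes ab: "a \<in> rb n" "b \<in> rb n"
    and p: "partner a (T i) = B k1" "partner b (T k1) = B j"
  shows "partner (comp a b) (T i) = B j"
  by (rule partner_comp_first_hit[OF ab, of "Suc (Suc 0)"])
     (auto simp: path_from_def p is_outer_def less_Suc_eq)

lemma partner_comp_T2:
  assumes ab: "a \<in> rb n" "b \<in> rb n"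
    and p: "partner a (T i) = B k1" "partner b (T k1) = T k2" "partner a (B k2) = T i'"
  shows "partner (comp a b) (T i) = T i'"
  by (rule partner_comp_first_hit[OF ab, of "Suc (Suc (Suc 0))"])
     (auto simp: path_from_def p is_outer_def less_Suc_eq)

lemma partner_comp_T3:
  assumes ab: "a \<in> rb n" "b \<in> rb n"
    and p: "partner a (T i) = B k1" "partner b (T k1) = T k2" "partner a (B k2) = B k3"
      "partner b (T k3) = B j"
  shows "partner (comp a b) (T i) = B j"
  by (rule partner_comp_first_hit[OF ab, of "Suc (Suc (Suc (Suc 0)))"])
     (auto simp: path_from_def p is_outer_def less_Suc_eq)

lemma partner_comp_T4:
  assumes ab: "a \<in> rb n" "b \<in> rb n"
    and p: "partner a (T i) = B k1" "partner b (T k1) = T k2" "partner a (B k2) = B k3"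
      "partner b (T k3) = T k4" "partner a (B k4) = T i'"
  shows "partner (comp a b) (T i) = T i'"
  by (rule partner_comp_first_hit[OF ab, of "Suc (Suc (Suc (Suc (Suc 0))))"])
     (auto simp: path_from_def p is_outer_def less_Suc_eq)

lemma partner_comp_B0:
  assumes ab: "a \<in> rb n" "b \<in> rb n"
    and p: "partner b (B j) = B j'"
  shows "partner (comp a b) (B j) = B j'"
  by (rule partner_comp_first_hit[OF ab, of "Suc 0"]) (auto simp: path_from_def p)

lemma partner_comp_B1:
  assumes ab: "a \<in> rb n" "b \<in> rb n"
    and p: "partner b (B j) = T k1" "partner a (B k1) = T i"
  shows "partner (comp a b) (B j) = T i"
  by (rule partner_comp_first_hit[OF ab, of "Suc (Suc 0)"])
     (auto simp: path_from_def p is_outer_def less_Suc_eq)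

lemma partner_comp_B2:
  assumes ab: "a \<in> rb n" "b \<in> rb n"
    and p: "partner b (B j) = T k1" "partner a (B k1) = B k2" "partner b (T k2) = B j'"
  shows "partner (comp a b) (B j) = B j'"
  by (rule partner_comp_first_hit[OF ab, of "Suc (Suc (Suc 0))"])
     (auto simp: path_from_def p is_outer_def less_Suc_eq)

lemma partner_comp_B3:
  assumes ab: "a \<in> rb n" "b \<in> rb n"
    and p: "partner b (B j) = T k1" "partner a (B k1) = B k2" "partner b (T k2) = T k3"
      "partner a (B k3) = T i"
  shows "partner (comp a b) (B j) = T i"
  by (rule partner_comp_first_hit[OF ab, of "Suc (Suc (Suc (Suc 0)))"])
     (auto simp: path_from_def p is_outer_def less_Suc_eq)

lemma partner_comp_B4:
  assumes ab: "a \<in> rb n" "b \<in> rb n"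
    and p: "partner b (B j) = T k1" "partner a (B k1) = B k2" "partner b (T k2) = T k3"
      "partner a (B k3) = B k4" "partner b (T k4) = B j'"
  shows "partner (comp a b) (B j) = B j'"
  by (rule partner_comp_first_hit[OF ab, of "Suc (Suc (Suc (Suc (Suc 0))))"])
     (auto simp: path_from_def p is_outer_def less_Suc_eq)

lemma partner_comp_B6:
  assumes ab: "a \<in> rb n" "b \<in> rb n"
    and p: "partner b (B j) = T k1" "partner a (B k1) = B k2" "partner b (T k2) = T k3"
      "partner a (B k3) = B k4" "partner b (T k4) = T k5" "partner a (B k5) = B k6"
      "partner b (T k6) = B j'"
  shows "partner (comp a b) (B j) = B j'"
  by (rule partner_comp_first_hit[OF ab, of "Suc (Suc (Suc (Suc (Suc (Suc (Suc 0))))))"])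
     (auto simp: path_from_def p is_outer_def less_Suc_eq)

lemma conn_Mid_Up: "a \<in> rb n \<Longrightarrow> b \<in> rb n \<Longrightarrow> partner a (B k) = T i \<Longrightarrow> conn a b (Mid k) (Up i)"
  using conn_upper_move[of a n b "Mid k"] by simp

lemma conn_Mid_Mid_upper: "a \<in> rb n \<Longrightarrow> b \<in> rb n \<Longrightarrow> partner a (B k) = B k' \<Longrightarrow> conn a b (Mid k) (Mid k')"
  using conn_upper_move[of a n b "Mid k"] by simp

lemma conn_Mid_Low: "a \<in> rb n \<Longrightarrow> b \<in> rb n \<Longrightarrow> partner b (T k) = B j \<Longrightarrow> conn a b (Mid k) (Low j)"
  using conn_lower_move[of a n b "Mid k"] by simp

lemma conn_Mid_Mid_lower: "a \<in> rb n \<Longrightarrow> b \<in> rb n \<Longrightarrow> partner b (T k) = T k' \<Longrightarrow> conn a b (Mid k) (Mid k')"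
  using conn_lower_move[of a n b "Mid k"] by simp

lemma loops_eq_0I: assumes "\<And>k. 1 \<le> k \<Longrightarrow> k \<le> n \<Longrightarrow> \<exists>w. conn a b (Mid k) w \<and> is_outer w"
  shows "loops n a b = 0"
proof -
  have "{C. \<exists>i\<in>{1..n}. C = {w. conn a b (Mid i) w} \<and> (\<forall>w\<in>C. \<exists>j. w = Mid j)} = {}"
  proof (rule ccontr)
    assume "\<not> ?thesis"
    then obtain i where i: "i \<in> {1..n}" "\<forall>w\<in>{w. conn a b (Mid i) w}. \<exists>j. w = Mid j" by blast
    obtain w where "conn a b (Mid i) w" "is_outer w" using assms i(1) by auto
    then show False using i(2) unfolding is_outer_def by auto
  qed
  then show ?thesis unfolding loops_def by simp
qed

lemma rtranclp_conj:
  assumes "bij F"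
  shows "(\<lambda>x y. R (F x) (F y))\<^sup>*\<^sup>* x y \<longleftrightarrow> R\<^sup>*\<^sup>* (F x) (F y)"
proof
  show "(\<lambda>x y. R (F x) (F y))\<^sup>*\<^sup>* x y \<Longrightarrow> R\<^sup>*\<^sup>* (F x) (F y)"
    by (induction rule: rtranclp_induct) (auto intro: rtranclp.rtrancl_into_rtrancl)
  have FF: "F (inv F u) = u" for u
    by (simp add: assms bij_is_surj surj_f_inv_f)
  have "R\<^sup>*\<^sup>* u w \<Longrightarrow> (\<lambda>x y. R (F x) (F y))\<^sup>*\<^sup>* (inv F u) (inv F w)" for u w
    by (induction rule: rtranclp_induct) (auto simp: FF intro: rtranclp.rtrancl_into_rtrancl)
  then show "R\<^sup>*\<^sup>* (F x) (F y) \<Longrightarrow> (\<lambda>x y. R (F x) (F y))\<^sup>*\<^sup>* x y"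
    using inv_f_f[OF bij_is_inj[OF assms]] by metis
qed

lemma conn_conj:
  assumes "a \<in> rb n" "b \<in> rb n" "a' \<in> rb n" "b' \<in> rb n" "bij F"
    and "\<And>x y. step_rel (upper_move a') (lower_move b') x y
                \<longleftrightarrow> step_rel (upper_move a) (lower_move b) (F x) (F y)"
  shows "conn a' b' x y \<longleftrightarrow> conn a b (F x) (F y)"
proof -
  have "step_rel (upper_move a') (lower_move b') = (\<lambda>x y. step_rel (upper_move a) (lower_move b) (F x) (F y))"
    using assms(6) by blast
  then show ?thesis
    unfolding conn_iff[OF assms(1,2)] conn_iff[OF assms(3,4)] using rtranclp_conj[OF assms(5)] by simp
qed

lemma partner_comp_conj:
  assumes ab: "a \<in> rb n" "b \<in> rb n" and ab': "a' \<in> rb n" "b' \<in> rb n"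
    and conn: "\<And>x y. conn a' b' x y \<longleftrightarrow> conn a b (F x) (F y)"
    and outer: "\<And>v. F (outer v) = outer (h v)" and h: "\<And>v. h' (h v) = v" "\<And>v. h (h' v) = v"
  shows "partner (comp a' b') v = h' (partner (comp a b) (h v))"
proof (cases "partner (comp a b) (h v) = h v")
  case False
  then have "{h v, partner (comp a b) (h v)} \<in> comp a b"
    using partner_arc[OF comp_rb[OF ab]] by blast
  then have "conn a b (outer (h v)) (outer (partner (comp a b) (h v)))"
    by (auto simp: comp_mem doubleton_eq_iff intro: conn_sym)
  then have "conn a' b' (outer v) (outer (h' (partner (comp a b) (h v))))"
    unfolding conn outer h(2) .
  moreover have "h' (partner (comp a b) (h v)) \<noteq> v" using False h by metis
  ultimately show ?thesis by (intro partner_comp_conn[OF ab']) auto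
next
  case True
  have "\<not> (\<exists>w. w \<noteq> v \<and> {v, w} \<in> comp a' b')"
  proof
    assume "\<exists>w. w \<noteq> v \<and> {v, w} \<in> comp a' b'"
    then obtain w where w: "w \<noteq> v" "conn a' b' (outer v) (outer w)"
      by (auto simp: comp_mem doubleton_eq_iff intro: conn_sym)
    have "conn a b (outer (h v)) (outer (h w))" using w(2) unfolding conn outer .
    moreover have "h w \<noteq> h v" using w(1) h by metis
    ultimately have "partner (comp a b) (h v) = h w" by (intro partner_comp_conn[OF ab])
    then show False using True \<open>h w \<noteq> h v\<close> by simp
  qed
  then show ?thesis using partner_eq_self True h by metis
qed

lemma loops_conj:
  assumes conn: "\<And>x y. conn a' b' x y \<longleftrightarrow> conn a b (F x) (F y)" and "surj F"
    and mid: "\<And>x i. F x = Mid i \<longleftrightarrow> x = Mid i"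
  shows "loops n a' b' = loops n a b"
proof -
  have same: "{w. conn a' b' (Mid i) w} = {w. conn a b (Mid i) w}"
    if "(\<forall>w\<in>{w. conn a' b' (Mid i) w}. \<exists>j. w = Mid j) \<or> (\<forall>w\<in>{w. conn a b (Mid i) w}. \<exists>j. w = Mid j)"
    for i
  proof -
    have S': "conn a' b' (Mid i) w \<longleftrightarrow> conn a b (Mid i) (F w)" for w
      using conn[of "Mid i" w] mid[of "Mid i" i] by simp
    from that show ?thesis
    proof
      assume "\<forall>w\<in>{w. conn a' b' (Mid i) w}. \<exists>j. w = Mid j"
      then show ?thesis using S' mid \<open>surj F\<close> by (auto simp: surj_def) metis+
    next
      assume "\<forall>w\<in>{w. conn a b (Mid i) w}. \<exists>j. w = Mid j"
      then show ?thesis using S' mid by (auto; metis)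
    qed
  qed
  show ?thesis
    unfolding loops_def by (rule arg_cong[where f = card]) (use same in blast)
qed

section \<open>The top-bottom flip\<close>

fun flip_vtx :: "vtx \<Rightarrow> vtx" where
  "flip_vtx (T i) = B i" | "flip_vtx (B i) = T i"

definition flip :: "diagram \<Rightarrow> diagram" where
  "flip D = (`) flip_vtx ` D"

fun mirror :: "svtx \<Rightarrow> svtx" where
  "mirror (Up i) = Low i" | "mirror (Mid i) = Mid i" | "mirror (Low i) = Up i"

lemma flip_vtx_flip_vtx [simp]: "flip_vtx (flip_vtx v) = v"
  by (cases v) auto

lemma mirror_mirror [simp]: "mirror (mirror x) = x"
  by (cases x) auto

lemma flip_vtx_image_eq: "flip_vtx ` e = X \<longleftrightarrow> e = flip_vtx ` X"
  by (auto simp: image_image)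

lemma flip_flip [simp]: "flip (flip D) = D"
  unfolding flip_def by (simp add: image_image)

lemma flip_vtx_verts [simp]: "flip_vtx v \<in> verts n \<longleftrightarrow> v \<in> verts n"
  by (cases v) (auto simp: verts_def)

lemma inj_flip_vtx: "inj flip_vtx"
  by (metis flip_vtx_flip_vtx injI)

lemma flip_rb: assumes D: "D \<in> rb n" shows "flip D \<in> rb n"
  unfolding rb_def
proof (intro CollectI conjI ballI impI)
  fix e' assume "e' \<in> flip D"
  then obtain e where "e \<in> D" "e' = flip_vtx ` e" unfolding flip_def by blast
  then obtain u v where "u \<in> verts n" "v \<in> verts n" "u \<noteq> v" "e' = {flip_vtx u, flip_vtx v}"
    using rb_arcD[OF D] by force
  then show "\<exists>u v. u \<in> verts n \<and> v \<in> verts n \<and> u \<noteq> v \<and> e' = {u, v}"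
    by (metis flip_vtx_flip_vtx flip_vtx_verts)
next
  fix e1' e2' assume "e1' \<in> flip D" "e2' \<in> flip D" "e1' \<noteq> e2'"
  then obtain e1 e2 where "e1 \<in> D" "e2 \<in> D" "e1 \<noteq> e2" "e1' = flip_vtx ` e1" "e2' = flip_vtx ` e2"
    unfolding flip_def by blast
  then show "e1' \<inter> e2' = {}"
    using rb_arcs_disjoint[OF D] image_Int[OF inj_flip_vtx] by (metis image_empty)
qed

lemma flip_arc_iff: "{u, v} \<in> flip D \<longleftrightarrow> {flip_vtx u, flip_vtx v} \<in> D"
proof -
  have *: "{u, v} = flip_vtx ` e \<longleftrightarrow> e = {flip_vtx u, flip_vtx v}" for e
    using flip_vtx_image_eq[of e "{u, v}"] by (simp add: eq_commute)
  show ?thesis unfolding flip_def image_iff * by simp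
qed

lemma partner_flip: assumes D: "D \<in> rb n"
  shows "partner (flip D) v = flip_vtx (partner D (flip_vtx v))"
proof (cases "partner D (flip_vtx v) = flip_vtx v")
  case True
  have "\<not> (\<exists>w. w \<noteq> v \<and> {v, w} \<in> flip D)"
  proof
    assume "\<exists>w. w \<noteq> v \<and> {v, w} \<in> flip D"
    then obtain w where "w \<noteq> v" "{flip_vtx v, flip_vtx w} \<in> D" unfolding flip_arc_iff by blast
    then have "flip_vtx w = flip_vtx v" using partner_eqI[OF D] True by metis
    then show False using \<open>w \<noteq> v\<close> by (metis flip_vtx_flip_vtx)
  qed
  then show ?thesis using True partner_eq_self by simp
next
  case False
  then have "{v, flip_vtx (partner D (flip_vtx v))} \<in> flip D"
    unfolding flip_arc_iff using partner_arc[OF D] by simp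
  then show ?thesis by (rule partner_eqI[OF flip_rb[OF D]])
qed

lemma upper_flip_vtx: "upper (flip_vtx v) = mirror (lower v)"
  by (cases v) auto

lemma lower_flip_vtx: "lower (flip_vtx v) = mirror (upper v)"
  by (cases v) auto

lemma outer_flip_vtx: "outer (flip_vtx v) = mirror (outer v)"
  by (cases v) auto

lemma upper_move_flip: "D \<in> rb n \<Longrightarrow> upper_move (flip D) x = mirror (lower_move D (mirror x))"
  by (cases x) (auto simp: partner_flip upper_flip_vtx)

lemma lower_move_flip: "D \<in> rb n \<Longrightarrow> lower_move (flip D) x = mirror (upper_move D (mirror x))"
  by (cases x) (auto simp: partner_flip lower_flip_vtx)

lemma bij_mirror: "bij mirror"
  by (metis bijI' mirror_mirror)

lemma conn_flip: assumes "a \<in> rb n" "b \<in> rb n"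
  shows "conn (flip b) (flip a) x y \<longleftrightarrow> conn a b (mirror x) (mirror y)"
proof (rule conn_conj[OF assms flip_rb[OF assms(2)] flip_rb[OF assms(1)] bij_mirror])
  fix x y
  show "step_rel (upper_move (flip b)) (lower_move (flip a)) x y
    \<longleftrightarrow> step_rel (upper_move a) (lower_move b) (mirror x) (mirror y)"
    unfolding step_rel_def upper_move_flip[OF assms(2)] lower_move_flip[OF assms(1)]
    by (metis mirror_mirror)
qed

lemma comp_flip: assumes "a \<in> rb n" "b \<in> rb n"
  shows "comp (flip b) (flip a) = flip (comp a b)"
proof (rule diagram_eqI[OF comp_rb flip_rb[OF comp_rb[OF assms]]])
  show "flip b \<in> rb n" "flip a \<in> rb n" using flip_rb assms by auto
  fix v
  show "partner (comp (flip b) (flip a)) v = partner (flip (comp a b)) v"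
    unfolding partner_flip[OF comp_rb[OF assms]]
    by (rule partner_comp_conj[OF assms flip_rb[OF assms(2)] flip_rb[OF assms(1)] conn_flip[OF assms]])
       (auto simp: outer_flip_vtx)
qed

lemma loops_flip: assumes "a \<in> rb n" "b \<in> rb n"
  shows "loops n (flip b) (flip a) = loops n a b"
  by (rule loops_conj[OF conn_flip[OF assms]]) (auto simp: bij_is_surj[OF bij_mirror] elim: mirror.elims)

section \<open>Permutation diagrams\<close>

definition perm_pair :: "nat \<Rightarrow> (nat \<Rightarrow> nat) \<Rightarrow> (nat \<Rightarrow> nat) \<Rightarrow> bool" where
  "perm_pair n s s' \<longleftrightarrow> (\<forall>k. s' (s k) = k \<and> s (s' k) = k) \<and> (\<forall>k. \<not> (1 \<le> k \<and> k \<le> n) \<longrightarrow> s k = k)"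

lemma perm_pairD: assumes "perm_pair n s s'"
  shows "s' (s k) = k" "s (s' k) = k" "\<not> (1 \<le> k \<and> k \<le> n) \<Longrightarrow> s k = k"
    "\<not> (1 \<le> k \<and> k \<le> n) \<Longrightarrow> s' k = k"
    "1 \<le> k \<Longrightarrow> k \<le> n \<Longrightarrow> 1 \<le> s k \<and> s k \<le> n"
    "1 \<le> k \<Longrightarrow> k \<le> n \<Longrightarrow> 1 \<le> s' k \<and> s' k \<le> n"
  using assms unfolding perm_pair_def by metis+

lemma perm_pair_sym: "perm_pair n s s' \<Longrightarrow> perm_pair n s' s"
  using perm_pairD unfolding perm_pair_def by metis

lemma perm_pair_transpose:
  "1 \<le> a \<Longrightarrow> a \<le> n \<Longrightarrow> 1 \<le> b \<Longrightarrow> b \<le> n \<Longrightarrow> perm_pair n (transpose a b) (transpose a b)"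
  unfolding perm_pair_def transpose_def by auto

lemma perm_pair_id: "perm_pair n id id"
  unfolding perm_pair_def by auto

definition perm_partner :: "nat \<Rightarrow> (nat \<Rightarrow> nat) \<Rightarrow> (nat \<Rightarrow> nat) \<Rightarrow> vtx \<Rightarrow> vtx" where
  "perm_partner n s s' v = (case v of
      T k \<Rightarrow> if 1 \<le> k \<and> k \<le> n then B (s k) else T k
    | B k \<Rightarrow> if 1 \<le> k \<and> k \<le> n then T (s' k) else B k)"

definition perm_diagram :: "nat \<Rightarrow> (nat \<Rightarrow> nat) \<Rightarrow> (nat \<Rightarrow> nat) \<Rightarrow> diagram" where
  "perm_diagram n s s' = arcs_of (perm_partner n s s')"

lemma partner_map_perm_partner:
  assumes "perm_pair n s s'"
  shows "partner_map n (perm_partner n s s')"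
  unfolding partner_map_def perm_partner_def using perm_pairD[OF assms]
  by (auto split: vtx.splits)

lemma perm_diagram_rb: "perm_pair n s s' \<Longrightarrow> perm_diagram n s s' \<in> rb n"
  unfolding perm_diagram_def by (rule arcs_of_rb[OF partner_map_perm_partner])

lemma partner_perm_diagram: "perm_pair n s s' \<Longrightarrow> partner (perm_diagram n s s') = perm_partner n s s'"
  unfolding perm_diagram_def by (rule partner_arcs_of[OF partner_map_perm_partner])

lemma partner_perm_diagram_T:
  "perm_pair n s s' \<Longrightarrow> 1 \<le> k \<Longrightarrow> k \<le> n \<Longrightarrow> partner (perm_diagram n s s') (T k) = B (s k)"
  by (simp add: partner_perm_diagram perm_partner_def)

lemma partner_perm_diagram_B:
  "perm_pair n s s' \<Longrightarrow> 1 \<le> k \<Longrightarrow> k \<le> n \<Longrightarrow> partner (perm_diagram n s s') (B k) = T (s' k)"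
  by (simp add: partner_perm_diagram perm_partner_def)

lemma partner_perm_diagram_T_outside:
  "perm_pair n s s' \<Longrightarrow> \<not> (1 \<le> k \<and> k \<le> n) \<Longrightarrow> partner (perm_diagram n s s') (T k) = T k"
  by (simp add: partner_perm_diagram perm_partner_def)

fun relabel_bottom :: "(nat \<Rightarrow> nat) \<Rightarrow> vtx \<Rightarrow> vtx" where
  "relabel_bottom s (T k) = T k"
| "relabel_bottom s (B k) = B (s k)"

fun relabel_top :: "(nat \<Rightarrow> nat) \<Rightarrow> vtx \<Rightarrow> vtx" where
  "relabel_top s (T k) = T (s k)"
| "relabel_top s (B k) = B k"

lemma relabel_top_inverse: "(\<And>k. s' (s k) = k) \<Longrightarrow> relabel_top s' (relabel_top s v) = v"
  by (cases v) auto

lemma relabel_bottom_inverse: "(\<And>k. s' (s k) = k) \<Longrightarrow> relabel_bottom s' (relabel_bottom s v) = v"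
  by (cases v) auto

lemma relabel_bottom_id[simp]: "relabel_bottom id v = v" by (cases v) auto

lemma comp_perm_left:
  assumes Y: "Y \<in> rb n" and s: "perm_pair n s s'"
  shows "partner (comp (perm_diagram n s s') Y) v = relabel_top s' (partner Y (relabel_top s v))"
    and "loops n (perm_diagram n s s') Y = 0"
proof -
  note P = perm_diagram_rb[OF s]
  have top_in: "partner (comp (perm_diagram n s s') Y) (T i) = relabel_top s' (partner Y (T (s i)))"
    if i: "1 \<le> i" "i \<le> n" for i
  proof -
    have p: "partner (perm_diagram n s s') (T i) = B (s i)" by (rule partner_perm_diagram_T[OF s i])
    have "partner Y (T (s i)) \<in> verts n" using partner_range[OF Y] perm_pairD(5)[OF s i] by simp
    then show ?thesis
      using partner_comp_T1[OF P Y p] partner_comp_T2[OF P Y p _ partner_perm_diagram_B[OF s]] perm_pairD(1)[OF s]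
      by (cases "partner Y (T (s i))") auto
  qed
  have top_out: "partner (comp (perm_diagram n s s') Y) (T i) = T i" if "\<not> (1 \<le> i \<and> i \<le> n)" for i
    using partner_comp_T0[OF P Y partner_perm_diagram_T_outside[OF s that]] partner_outside[OF Y] that by simp
  have bottom: "partner (comp (perm_diagram n s s') Y) (B j) = relabel_top s' (partner Y (B j))" for j
  proof (cases "partner Y (B j)")
    case (T k)
    then have "1 \<le> k \<and> k \<le> n" using partner_T_range[OF Y T] by simp
    then show ?thesis using partner_comp_B1[OF P Y T partner_perm_diagram_B[OF s]] T by simp
  qed (simp add: partner_comp_B0[OF P Y])
  show "partner (comp (perm_diagram n s s') Y) v = relabel_top s' (partner Y (relabel_top s v))"
  proof (cases v)
    case (T i)
    show ?thesis
    proof (cases "1 \<le> i \<and> i \<le> n")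
      case False
      then show ?thesis
        using T top_out partner_outside[OF Y, of "T i"] perm_pairD(3,4)[OF s False] by simp
    qed (use T top_in in simp)
  qed (simp add: bottom)
  show "loops n (perm_diagram n s s') Y = 0"
    by (rule loops_eq_0I) (use conn_Mid_Up[OF P Y partner_perm_diagram_B[OF s]] is_outer_def in blast)
qed

lemma flip_perm_diagram: assumes s: "perm_pair n s s'"
  shows "flip (perm_diagram n s s') = perm_diagram n s' s"
proof (rule diagram_eqI[OF flip_rb[OF perm_diagram_rb[OF s]] perm_diagram_rb[OF perm_pair_sym[OF s]]])
  fix v show "partner (flip (perm_diagram n s s')) v = partner (perm_diagram n s' s) v"
    unfolding partner_flip[OF perm_diagram_rb[OF s]] partner_perm_diagram[OF s]
      partner_perm_diagram[OF perm_pair_sym[OF s]]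
    by (cases v) (auto simp: perm_partner_def)
qed

lemma flip_vtx_relabel_top: "flip_vtx (relabel_top s (flip_vtx v)) = relabel_bottom s v"
  by (cases v) auto

lemma comp_perm_right:
  assumes Y: "Y \<in> rb n" and s: "perm_pair n s s'"
  shows "partner (comp Y (perm_diagram n s s')) v = relabel_bottom s (partner Y (relabel_bottom s' v))"
    and "loops n Y (perm_diagram n s s') = 0"
proof -
  note P = perm_diagram_rb[OF s] and Y' = flip_rb[OF Y] and s' = perm_pair_sym[OF s]
  have "comp Y (perm_diagram n s s') = flip (comp (perm_diagram n s' s) (flip Y))"
    using comp_flip[OF Y P] flip_perm_diagram[OF s] by simp
  then show "partner (comp Y (perm_diagram n s s')) v = relabel_bottom s (partner Y (relabel_bottom s' v))"
    by (simp add: partner_flip[OF comp_rb[OF perm_diagram_rb[OF s'] Y']] comp_perm_left(1)[OF Y' s']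
        partner_flip[OF Y] flip_vtx_relabel_top)
  have "loops n Y (perm_diagram n s s') = loops n (perm_diagram n s' s) (flip Y)"
    using loops_flip[OF Y P] flip_perm_diagram[OF s] by simp
  then show "loops n Y (perm_diagram n s s') = 0" using comp_perm_left(2)[OF Y' s'] by simp
qed

lemma comp_perm_right_cancel: assumes Y: "Y \<in> rb n" and s: "perm_pair n s s'"
  shows "comp (comp Y (perm_diagram n s s')) (perm_diagram n s' s) = Y"
proof (rule diagram_eqI[OF comp_rb[OF comp_rb[OF Y perm_diagram_rb[OF s]] perm_diagram_rb[OF perm_pair_sym[OF s]]] Y])
  fix v show "partner (comp (comp Y (perm_diagram n s s')) (perm_diagram n s' s)) v = partner Y v"
    unfolding comp_perm_right(1)[OF comp_rb[OF Y perm_diagram_rb[OF s]] perm_pair_sym[OF s]]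
      comp_perm_right(1)[OF Y s]
    using relabel_bottom_inverse perm_pairD[OF s] by simp
qed

fun relabel_up :: "(nat \<Rightarrow> nat) \<Rightarrow> svtx \<Rightarrow> svtx" where
  "relabel_up s (Up i) = Up (s i)" | "relabel_up s (Mid i) = Mid i" | "relabel_up s (Low i) = Low i"

lemma relabel_up_inverse: "perm_pair n s s' \<Longrightarrow> relabel_up s' (relabel_up s x) = x"
  by (cases x) (auto simp: perm_pairD)

lemma relabel_up_eq_iff: assumes "perm_pair n s s'"
  shows "relabel_up s y = w \<longleftrightarrow> y = relabel_up s' w"
  using relabel_up_inverse[OF assms] relabel_up_inverse[OF perm_pair_sym[OF assms]] by metis

lemma bij_relabel_up: assumes "perm_pair n s s'" shows "bij (relabel_up s)"
  by (rule o_bij[of "relabel_up s'"])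
     (simp_all add: fun_eq_iff relabel_up_inverse[OF assms] relabel_up_inverse[OF perm_pair_sym[OF assms]])

lemma relabel_up_lower [simp]: "relabel_up s (lower v) = lower v"
  by (cases v) auto

lemma outer_relabel_top: "outer (relabel_top s v) = relabel_up s (outer v)"
  by (cases v) auto

lemma upper_move_perm_left: assumes "Y \<in> rb n" "perm_pair n s s'"
  shows "upper_move (comp (perm_diagram n s s') Y) x = relabel_up s' (upper_move Y (relabel_up s x))"
proof -
  have up: "upper (relabel_top s' v) = relabel_up s' (upper v)" for v
    by (cases v) auto
  show ?thesis
    by (cases x) (simp_all only: upper_move.simps comp_perm_left(1)[OF assms] up relabel_up.simps relabel_top.simps)
qed

lemma lower_move_relabel_up: "lower_move Z (relabel_up s x) = relabel_up s (lower_move Z x)"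
  by (cases x) simp_all

lemma conn_perm_left: assumes Y: "Y \<in> rb n" "Z \<in> rb n" and s: "perm_pair n s s'"
  shows "conn (comp (perm_diagram n s s') Y) Z x y \<longleftrightarrow> conn Y Z (relabel_up s x) (relabel_up s y)"
proof (rule conn_conj[OF Y comp_rb[OF perm_diagram_rb[OF s] Y(1)] Y(2) bij_relabel_up[OF s]])
  fix x y
  have "step_rel (upper_move (comp (perm_diagram n s s') Y)) (lower_move Z) x y
    \<longleftrightarrow> y = relabel_up s' (upper_move Y (relabel_up s x)) \<or> y = lower_move Z x"
    by (simp only: step_rel_def upper_move_perm_left[OF Y(1) s])
  also have "\<dots> \<longleftrightarrow> relabel_up s y = upper_move Y (relabel_up s x) \<or> relabel_up s y = relabel_up s (lower_move Z x)"
    by (simp add: relabel_up_eq_iff[OF s] relabel_up_inverse[OF s])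
  also have "\<dots> \<longleftrightarrow> step_rel (upper_move Y) (lower_move Z) (relabel_up s x) (relabel_up s y)"
    by (simp only: step_rel_def lower_move_relabel_up)
  finally show "step_rel (upper_move (comp (perm_diagram n s s') Y)) (lower_move Z) x y
    \<longleftrightarrow> step_rel (upper_move Y) (lower_move Z) (relabel_up s x) (relabel_up s y)" .
qed

lemma comp_perm_left_assoc: assumes Y: "Y \<in> rb n" "Z \<in> rb n" and s: "perm_pair n s s'"
  shows "comp (comp (perm_diagram n s s') Y) Z = comp (perm_diagram n s s') (comp Y Z)"
proof (rule diagram_eqI[OF comp_rb[OF comp_rb[OF perm_diagram_rb[OF s] Y(1)] Y(2)]
                        comp_rb[OF perm_diagram_rb[OF s] comp_rb[OF Y]]])
  fix v
  show "partner (comp (comp (perm_diagram n s s') Y) Z) v = partner (comp (perm_diagram n s s') (comp Y Z)) v"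
    unfolding comp_perm_left(1)[OF comp_rb[OF Y] s]
    by (rule partner_comp_conj[OF Y comp_rb[OF perm_diagram_rb[OF s] Y(1)] Y(2) conn_perm_left[OF Y s]])
       (auto simp: outer_relabel_top relabel_top_inverse perm_pairD[OF s])
qed

lemma loops_perm_left_assoc: assumes Y: "Y \<in> rb n" "Z \<in> rb n" and s: "perm_pair n s s'"
  shows "loops n (comp (perm_diagram n s s') Y) Z = loops n Y Z"
proof (rule loops_conj[OF conn_perm_left[OF Y s]])
  show "surj (relabel_up s)" by (rule bij_is_surj[OF bij_relabel_up[OF s]])
qed (auto elim: relabel_up.elims)

lemma perm_diagram_eq:
  assumes s: "perm_pair n s s'"
  shows "perm_diagram n s s' = {{T k, B (s k)} | k. 1 \<le> k \<and> k \<le> n}"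
proof -
  have "{{T k, B (s k)} | k. 1 \<le> k \<and> k \<le> n} = arcs_of (perm_partner n s s')"
  proof (rule arcs_of_eqI)
    fix e assume "e \<in> {{T k, B (s k)} | k. 1 \<le> k \<and> k \<le> n}"
    then obtain k where "e = {T k, B (s k)}" "1 \<le> k" "k \<le> n" by blast
    then show "\<exists>v. e = {v, perm_partner n s s' v} \<and> perm_partner n s s' v \<noteq> v"
      by (intro exI[of _ "T k"]) (simp add: perm_partner_def)
  next
    fix v assume v: "perm_partner n s s' v \<noteq> v"
    show "{v, perm_partner n s s' v} \<in> {{T k, B (s k)} | k. 1 \<le> k \<and> k \<le> n}"
    proof (cases v)
      case (T k) then show ?thesis using v by (auto simp: perm_partner_def split: if_splits)
    next
      case (B k)
      then have "1 \<le> k \<and> k \<le> n" using v by (auto simp: perm_partner_def split: if_splits)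
      then have "{v, perm_partner n s s' v} = {T (s' k), B (s (s' k))}" "1 \<le> s' k \<and> s' k \<le> n"
        using B perm_pairD[OF s] by (auto simp: perm_partner_def insert_commute)
      then show ?thesis by blast
    qed
  qed
  then show ?thesis unfolding perm_diagram_def by simp
qed

lemma perm_diagram_perms: assumes "perm_pair n s s'" shows "perm_diagram n s s' \<in> perms n"
proof -
  have eq: "perm_diagram n s s' = (\<lambda>k. {T k, B (s k)}) ` {1..n}" using perm_diagram_eq[OF assms] by auto
  have "inj_on (\<lambda>k. {T k, B (s k)}) {1..n}" by (auto simp: inj_on_def doubleton_eq_iff)
  then have "card (perm_diagram n s s') = n" using eq card_image by fastforce
  moreover have "\<forall>e\<in>perm_diagram n s s'. vertical_arc e" using eq unfolding vertical_arc_def by auto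
  ultimately show ?thesis unfolding perms_def using perm_diagram_rb[OF assms] by blast
qed

lemma idd_eq: "idd n = perm_diagram n id id"
  unfolding perm_diagram_eq[OF perm_pair_id] idd_def by simp

text \<open>reconnect xi a c joins a to c and the former partners of a and c to each other; if one of
  a and c was isolated, the former partner of the other becomes isolated.\<close>

definition reconnect :: "('a \<Rightarrow> 'a) \<Rightarrow> 'a \<Rightarrow> 'a \<Rightarrow> 'a \<Rightarrow> 'a" where
  "reconnect \<xi> a c v =
     (if v = a then c else if v = c then a
      else if v = \<xi> a then (if \<xi> c = c then v else \<xi> c)
      else if v = \<xi> c then (if \<xi> a = a then v else \<xi> a)
      else \<xi> v)"

lemma reconnect_reconnect:
  assumes inv: "\<And>v. \<xi> (\<xi> v) = v" and "a \<noteq> c" "\<xi> a \<noteq> c"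
  shows "reconnect \<xi> a c (reconnect \<xi> a c v) = v"
  using assms inv[of a] inv[of c] inv[of v] unfolding reconnect_def by (smt (verit))

lemma partner_map_reconnect:
  assumes \<xi>: "partner_map n \<xi>" and ac: "a \<in> verts n" "c \<in> verts n" "a \<noteq> c" "\<xi> a \<noteq> c"
  shows "partner_map n (reconnect \<xi> a c)"
proof -
  have inv: "\<And>v. \<xi> (\<xi> v) = v" and supp: "\<And>v. \<xi> v \<noteq> v \<Longrightarrow> v \<in> verts n"
    using \<xi> unfolding partner_map_def by auto
  have "\<xi> v \<in> verts n" if "v \<in> verts n" for v
    using that supp inv by metis
  then have "v \<in> verts n" if "reconnect \<xi> a c v \<noteq> v" for v
    using that ac supp unfolding reconnect_def by (auto split: if_splits)
  then show ?thesis
    unfolding partner_map_def using reconnect_reconnect[OF inv ac(3,4)] by blast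
qed

lemma reconnect_undo:
  assumes inv: "\<And>v. \<xi> (\<xi> v) = v" and "\<xi> b = a" "a \<noteq> b" "c \<noteq> a" "c \<noteq> b"
  shows "reconnect (reconnect \<xi> a c) b a = \<xi>"
proof
  fix v show "reconnect (reconnect \<xi> a c) b a v = \<xi> v"
    using assms inv[of a] inv[of c] inv[of v] unfolding reconnect_def by (smt (verit))
qed

lemma reconnect_isolated:
  "\<xi> a = a \<Longrightarrow> \<xi> c = c \<Longrightarrow> reconnect \<xi> a c v = (if v = a then c else if v = c then a else \<xi> v)"
  unfolding reconnect_def by auto

lemma gg_eq:
  assumes "1 \<le> p" "p + 1 \<le> n"
  shows "gg n p = perm_diagram n (transpose p (p+1)) (transpose p (p+1))"
proof -
  have b: "perm_pair n (transpose p (p+1)) (transpose p (p+1))" using perm_pair_transpose assms by simp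
  show ?thesis unfolding perm_diagram_eq[OF b]
  proof (intro set_eqI iffI)
    fix e assume "e \<in> gg n p"
    then consider k where "e = {T k, B k}" "1 \<le> k" "k \<le> n" "k \<noteq> p" "k \<noteq> p+1"
      | "e = {T p, B (p+1)}" | "e = {T (p+1), B p}" unfolding gg_def by blast
    then show "e \<in> {{T k, B (transpose p (p+1) k)} | k. 1 \<le> k \<and> k \<le> n}"
    proof cases
      case (1 k) then show ?thesis unfolding transpose_def by (intro CollectI exI[of _ k]) simp
    next
      case 2 then show ?thesis using assms unfolding transpose_def by (intro CollectI exI[of _ p]) simp
    next
      case 3 then show ?thesis using assms unfolding transpose_def by (intro CollectI exI[of _ "p+1"]) simp
    qed
  next
    fix e assume "e \<in> {{T k, B (transpose p (p+1) k)} | k. 1 \<le> k \<and> k \<le> n}"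
    then obtain k where k: "e = {T k, B (transpose p (p+1) k)}" "1 \<le> k" "k \<le> n" by blast
    show "e \<in> gg n p"
    proof (cases "k = p \<or> k = p + 1")
      case True then show ?thesis using k unfolding gg_def transpose_def by auto
    next
      case False
      then have "e = {T k, B k}" using k unfolding transpose_def by simp
      then show ?thesis using k False unfolding gg_def by blast
    qed
  qed
qed

lemma flip_gg: assumes "1 \<le> p" "p + 1 \<le> n" shows "flip (gg n p) = gg n p"
  using flip_perm_diagram[OF perm_pair_transpose] gg_eq assms by simp

definition ee_partner :: "nat \<Rightarrow> nat \<Rightarrow> vtx \<Rightarrow> vtx" where
  "ee_partner n p v = (case v of
      T k \<Rightarrow> if 1 \<le> k \<and> k \<le> n then (if k = p then T (p+1) else if k = p+1 then T p else B k) else T k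
    | B k \<Rightarrow> if 1 \<le> k \<and> k \<le> n then (if k = p then B (p+1) else if k = p+1 then B p else T k) else B k)"

definition uu_partner :: "nat \<Rightarrow> nat \<Rightarrow> vtx \<Rightarrow> vtx" where
  "uu_partner n m v = (case v of
      T k \<Rightarrow> if 1 \<le> k \<and> k \<le> n \<and> k \<noteq> m then B k else T k
    | B k \<Rightarrow> if 1 \<le> k \<and> k \<le> n \<and> k \<noteq> m then T k else B k)"

lemma partner_map_ee_partner: "1 \<le> p \<Longrightarrow> p + 1 \<le> n \<Longrightarrow> partner_map n (ee_partner n p)"
  unfolding partner_map_def ee_partner_def by (auto split: vtx.splits)

lemma partner_map_uu_partner: "partner_map n (uu_partner n m)"
  unfolding partner_map_def uu_partner_def by (auto split: vtx.splits)

lemma ee_eq: assumes "1 \<le> p" "p + 1 \<le> n" shows "ee n p = arcs_of (ee_partner n p)"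
proof (rule arcs_of_eqI)
  fix e assume "e \<in> ee n p"
  then consider k where "e = {T k, B k}" "1 \<le> k" "k \<le> n" "k \<noteq> p" "k \<noteq> p+1"
      | "e = {T p, T (p+1)}" | "e = {B p, B (p+1)}" unfolding ee_def by blast
  then show "\<exists>v. e = {v, ee_partner n p v} \<and> ee_partner n p v \<noteq> v"
  proof cases
    case (1 k) then show ?thesis unfolding ee_partner_def by (intro exI[of _ "T k"]) simp
  next
    case 2 then show ?thesis using assms unfolding ee_partner_def by (intro exI[of _ "T p"]) simp
  next
    case 3 then show ?thesis using assms unfolding ee_partner_def by (intro exI[of _ "B p"]) simp
  qed
next
  fix v assume v: "ee_partner n p v \<noteq> v"
  show "{v, ee_partner n p v} \<in> ee n p"
  proof (cases v)
    case (T k)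
    then have k: "1 \<le> k \<and> k \<le> n" using v unfolding ee_partner_def by (auto split: if_splits)
    show ?thesis
    proof (cases "k = p \<or> k = p + 1")
      case True then show ?thesis using T k unfolding ee_partner_def ee_def by (auto simp: insert_commute)
    next
      case False then show ?thesis using T k unfolding ee_partner_def ee_def by auto
    qed
  next
    case (B k)
    then have k: "1 \<le> k \<and> k \<le> n" using v unfolding ee_partner_def by (auto split: if_splits)
    show ?thesis
    proof (cases "k = p \<or> k = p + 1")
      case True then show ?thesis using B k unfolding ee_partner_def ee_def by (auto simp: insert_commute)
    next
      case False then show ?thesis using B k unfolding ee_partner_def ee_def by (auto simp: insert_commute)
    qed
  qed
qed

lemma uu_eq: "uu n m = arcs_of (uu_partner n m)"
proof (rule arcs_of_eqI)
  fix e assume "e \<in> uu n m"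
  then obtain k where "e = {T k, B k}" "1 \<le> k" "k \<le> n" "k \<noteq> m" unfolding uu_def by blast
  then show "\<exists>v. e = {v, uu_partner n m v} \<and> uu_partner n m v \<noteq> v" unfolding uu_partner_def by (intro exI[of _ "T k"]) simp
next
  fix v assume v: "uu_partner n m v \<noteq> v"
  show "{v, uu_partner n m v} \<in> uu n m"
  proof (cases v)
    case (T k) then show ?thesis using v unfolding uu_partner_def uu_def by (auto split: if_splits)
  next
    case (B k) then show ?thesis using v unfolding uu_partner_def uu_def by (auto split: if_splits simp: insert_commute)
  qed
qed

lemma ee_rb: "1 \<le> p \<Longrightarrow> p + 1 \<le> n \<Longrightarrow> ee n p \<in> rb n"
  using ee_eq arcs_of_rb partner_map_ee_partner by simp

lemma partner_ee: "1 \<le> p \<Longrightarrow> p + 1 \<le> n \<Longrightarrow> partner (ee n p) = ee_partner n p"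
  using ee_eq partner_arcs_of[OF partner_map_ee_partner] by simp

lemma uu_rb: "uu n m \<in> rb n"
  using uu_eq arcs_of_rb partner_map_uu_partner by simp

lemma partner_uu: "partner (uu n m) = uu_partner n m"
  using uu_eq partner_arcs_of[OF partner_map_uu_partner] by simp

lemma partner_uu_T: "partner (uu n m) (T k) = (if 1 \<le> k \<and> k \<le> n \<and> k \<noteq> m then B k else T k)"
  unfolding partner_uu uu_partner_def by simp

lemma partner_uu_B: "partner (uu n m) (B k) = (if 1 \<le> k \<and> k \<le> n \<and> k \<noteq> m then T k else B k)"
  unfolding partner_uu uu_partner_def by simp

lemma partner_ee_T: "1 \<le> p \<Longrightarrow> p + 1 \<le> n \<Longrightarrow> partner (ee n p) (T k) =
   (if 1 \<le> k \<and> k \<le> n then (if k = p then T (p+1) else if k = p+1 then T p else B k) else T k)"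
  unfolding partner_ee ee_partner_def by simp

lemma partner_ee_B: "1 \<le> p \<Longrightarrow> p + 1 \<le> n \<Longrightarrow> partner (ee n p) (B k) =
   (if 1 \<le> k \<and> k \<le> n then (if k = p then B (p+1) else if k = p+1 then B p else T k) else B k)"
  unfolding partner_ee ee_partner_def by simp

lemma flip_ee: assumes p: "1 \<le> p" "p + 1 \<le> n" shows "flip (ee n p) = ee n p"
proof (rule diagram_eqI[OF flip_rb[OF ee_rb[OF p]] ee_rb[OF p]])
  fix v show "partner (flip (ee n p)) v = partner (ee n p) v"
    unfolding partner_flip[OF ee_rb[OF p]] partner_ee[OF p]
    by (cases v) (auto simp: ee_partner_def)
qed

lemma partner_comp_uu_T:
  assumes P: "P \<in> rb n" and m: "1 \<le> m" "m \<le> n"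
  shows "partner (comp P (uu n m)) (T i) = (if partner P (T i) = B m then T i else partner P (T i))"
proof (cases "partner P (T i)")
  case (T i')
  then show ?thesis using partner_comp_T0[OF P uu_rb] by simp
next
  case (B k)
  then have "1 \<le> k" "k \<le> n" using partner_B_range[OF P B] by auto
  then show ?thesis
    using partner_comp_T1[OF P uu_rb B] partner_comp_T2[OF P uu_rb B _ partner_sym[OF P B]] B
    by (cases "k = m") (simp_all add: partner_uu_T)
qed

lemma partner_comp_uu_B:
  assumes P: "P \<in> rb n" and m: "1 \<le> m" "m \<le> n" and k: "k \<noteq> m"
  shows "partner (comp P (uu n m)) (B k) = (if partner P (B k) = B m then B k else partner P (B k))"
proof (cases "1 \<le> k \<and> k \<le> n")
  case False
  then show ?thesis using partner_comp_B0[OF P uu_rb] partner_outside[OF P] by (simp add: partner_uu_B)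
next
  case True
  then have uB: "partner (uu n m) (B k) = T k" using k by (simp add: partner_uu_B)
  show ?thesis
  proof (cases "partner P (B k)")
    case (T i)
    then show ?thesis using partner_comp_B1[OF P uu_rb uB] by simp
  next
    case (B k')
    then have "1 \<le> k' \<and> k' \<le> n" using partner_range[OF P, of "B k"] True by simp
    then show ?thesis
      using partner_comp_B2[OF P uu_rb uB B] partner_comp_B4[OF P uu_rb uB B _ partner_sym[OF P B]] B True k
      by (cases "k' = m") (simp_all add: partner_uu_T)
  qed
qed

lemma partner_comp_uu:
  assumes P: "P \<in> rb n" and m: "1 \<le> m" "m \<le> n"
  shows "partner (comp P (uu n m)) v = (if v = B m \<or> partner P v = B m then v else partner P v)"
proof (cases v)
  case (B k)
  show ?thesis
  proof (cases "k = m")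
    case True
    then show ?thesis using partner_comp_B0[OF P uu_rb] B by (simp add: partner_uu_B)
  qed (use partner_comp_uu_B[OF P m] B in simp)
qed (simp add: partner_comp_uu_T[OF P m])

lemma loops_comp_uu:
  assumes P: "P \<in> rb n" and "partner P (B m) \<noteq> B m"
  shows "loops n P (uu n m) = 0"
proof (rule loops_eq_0I)
  fix k assume k: "1 \<le> k" "k \<le> n"
  show "\<exists>w. conn P (uu n m) (Mid k) w \<and> is_outer w"
  proof (cases "k = m")
    case True
    show ?thesis
    proof (cases "partner P (B m)")
      case (T i)
      then show ?thesis using conn_Mid_Up[OF P uu_rb] True is_outer_def by blast
    next
      case (B j)
      then have "j \<noteq> m" "1 \<le> j" "j \<le> n" using assms partner_B_range[OF P B] by auto
      then have "conn P (uu n m) (Mid j) (Low j)"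
        by (intro conn_Mid_Low[OF P uu_rb]) (simp add: partner_uu_T)
      then show ?thesis
        using conn_Mid_Mid_upper[OF P uu_rb B] True conn_trans is_outer_def by blast
    qed
  next
    case False
    then have "partner (uu n m) (T k) = B k" using k by (simp add: partner_uu_T)
    then show ?thesis using conn_Mid_Low[OF P uu_rb] is_outer_def by blast
  qed
qed

lemma partner_comp_top_arc_T:
  assumes ab: "a \<in> rb n" "b \<in> rb n"
    and arc: "partner b (T r) = T r'" "r \<noteq> r'"
    and vert: "\<And>k. 1 \<le> k \<Longrightarrow> k \<le> n \<Longrightarrow> k \<noteq> r \<Longrightarrow> k \<noteq> r' \<Longrightarrow> partner b (T k) = B k"
    and i: "partner a (T i) = B r"
  shows "partner (comp a b) (T i) = (if partner a (B r') = B r' then T i else partner a (B r'))"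
proof (cases "partner a (B r')")
  case (T i')
  then show ?thesis using partner_comp_T2[OF ab i arc(1)] by simp
next
  case (B k)
  show ?thesis
  proof (cases "k = r'")
    case True
    then show ?thesis
      using partner_comp_T4[OF ab i arc(1) _ partner_sym[OF ab(2) arc(1)] partner_sym[OF ab(1) i]] B by simp
  next
    case False
    have "k \<noteq> r" using partner_sym[OF ab(1) i] partner_sym[OF ab(1) B] by auto
    moreover have "1 \<le> k \<and> k \<le> n" using partner_B_range[OF ab(1) B] B False by simp
    ultimately show ?thesis using partner_comp_T3[OF ab i arc(1) B vert] False B by simp
  qed
qed

lemma partner_comp_top_arc_B:
  assumes ab: "a \<in> rb n" "b \<in> rb n"
    and arc: "partner b (T r) = T r'" "r \<noteq> r'"
    and vert: "\<And>k. 1 \<le> k \<Longrightarrow> k \<le> n \<Longrightarrow> k \<noteq> r \<Longrightarrow> k \<noteq> r' \<Longrightarrow> partner b (T k) = B k"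
    and j: "partner b (B j) = T j" "partner a (B j) = B r" "j \<noteq> r" "j \<noteq> r'"
  shows "partner (comp a b) (B j) = (if partner a (B r') = B r' then B j else partner a (B r'))"
proof (cases "partner a (B r')")
  case (T i)
  then show ?thesis using partner_comp_B3[OF ab j(1,2) arc(1)] by simp
next
  case (B k)
  show ?thesis
  proof (cases "k = r'")
    case True
    then show ?thesis
      using partner_comp_B6[OF ab j(1,2) arc(1) _ partner_sym[OF ab(2) arc(1)] partner_sym[OF ab(1) j(2)]
          partner_sym[OF ab(2) j(1)]] B by simp
  next
    case False
    have "k \<noteq> r" using partner_sym[OF ab(1) j(2)] partner_sym[OF ab(1) B] j(3,4) by auto
    moreover have "1 \<le> k \<and> k \<le> n" using partner_B_range[OF ab(1) B] B False by simp
    ultimately show ?thesis using partner_comp_B4[OF ab j(1,2) arc(1) B vert] False B by simp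
  qed
qed

lemma partner_comp_ee_T:
  assumes P: "P \<in> rb n" and p: "1 \<le> p" "p + 1 \<le> n"
  shows "partner (comp P (ee n p)) (T i) = reconnect (partner P) (B p) (B (p + 1)) (T i)"
proof -
  note E = ee_rb[OF p] and eT = partner_ee_T[OF p]
  show ?thesis
  proof (cases "partner P (T i)")
    case (T i')
    have "T i \<noteq> partner P (B r)" for r using partner_sym[OF P] T by fastforce
    then show ?thesis using partner_comp_T0[OF P E] T unfolding reconnect_def by simp
  next
    case (B k)
    then have k: "1 \<le> k" "k \<le> n" using partner_B_range[OF P B] by auto
    consider "k = p" | "k = p + 1" | "k \<noteq> p" "k \<noteq> p + 1" by blast
    then show ?thesis
    proof cases
      case 1
      then have "partner P (B p) = T i" "partner P (B (p + 1)) \<noteq> B p"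
        using partner_sym[OF P B] partner_sym[OF P, of "B (p + 1)" "B p"] by auto
      then show ?thesis
        using partner_comp_top_arc_T[OF P E, of p "p + 1"] B 1 p eT unfolding reconnect_def by auto
    next
      case 2
      then have "partner P (B (p + 1)) = T i" "partner P (B p) \<noteq> B (p + 1)"
        using partner_sym[OF P B] partner_sym[OF P, of "B p" "B (p + 1)"] by auto
      then show ?thesis
        using partner_comp_top_arc_T[OF P E, of "p + 1" p] B 2 p eT unfolding reconnect_def by auto
    next
      case 3
      have "T i \<noteq> partner P (B r)" if "r \<noteq> k" for r
        using partner_sym[OF P, of "B r" "T i"] B that by auto
      then show ?thesis using partner_comp_T1[OF P E B] B k eT 3 unfolding reconnect_def by auto
    qed
  qed
qed

lemma partner_comp_ee_B:
  assumes P: "P \<in> rb n" and p: "1 \<le> p" "p + 1 \<le> n"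
  shows "partner (comp P (ee n p)) (B j) = reconnect (partner P) (B p) (B (p + 1)) (B j)"
proof (cases "1 \<le> j \<and> j \<le> n \<and> j \<noteq> p \<and> j \<noteq> p + 1")
  note E = ee_rb[OF p] and eT = partner_ee_T[OF p] and eB = partner_ee_B[OF p]
  case False
  then consider "j = p" | "j = p + 1" | "\<not> (1 \<le> j \<and> j \<le> n)" by blast
  then show ?thesis
  proof cases
    case 3
    then have "partner P (B j) = B j" using partner_outside[OF P] by simp
    moreover have "B j \<noteq> partner P (B r)" if "1 \<le> r" "r \<le> n" for r
      using partner_sym[OF P, of "B r" "B j"] 3 that \<open>partner P (B j) = B j\<close> by auto
    ultimately show ?thesis using partner_comp_B0[OF P E] eB 3 p unfolding reconnect_def by auto
  qed (use partner_comp_B0[OF P E] eB p in \<open>auto simp: reconnect_def\<close>)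
next
  note E = ee_rb[OF p] and eT = partner_ee_T[OF p] and eB = partner_ee_B[OF p]
  case True
  then have ej: "partner (ee n p) (B j) = T j" using eB by simp
  show ?thesis
  proof (cases "partner P (B j)")
    case (T i)
    have "B j \<noteq> partner P (B r)" for r using partner_sym[OF P, of "B r" "B j"] T by auto
    then show ?thesis using partner_comp_B1[OF P E ej T] True T unfolding reconnect_def by auto
  next
    case (B k)
    have k: "1 \<le> k \<and> k \<le> n" using partner_range[OF P, of "B j"] B True by simp
    consider "k = p" | "k = p + 1" | "k \<noteq> p" "k \<noteq> p + 1" by blast
    then show ?thesis
    proof cases
      case 1
      then have "partner P (B p) = B j" "partner P (B (p + 1)) \<noteq> B p"
        using partner_sym[OF P B] partner_sym[OF P, of "B (p + 1)" "B p"] True by auto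
      then show ?thesis
        using partner_comp_top_arc_B[OF P E, of p "p + 1" j] B 1 True p eT ej unfolding reconnect_def by auto
    next
      case 2
      then have "partner P (B (p + 1)) = B j" "partner P (B p) \<noteq> B (p + 1)"
        using partner_sym[OF P B] partner_sym[OF P, of "B p" "B (p + 1)"] True by auto
      then show ?thesis
        using partner_comp_top_arc_B[OF P E, of "p + 1" p j] B 2 True p eT ej unfolding reconnect_def by auto
    next
      case 3
      have "B j \<noteq> partner P (B r)" if "r \<noteq> k" for r
        using partner_sym[OF P, of "B r" "B j"] B that by auto
      then show ?thesis using partner_comp_B2[OF P E ej B] B k eT 3 True unfolding reconnect_def by auto
    qed
  qed
qed

lemma partner_comp_ee:
  assumes "P \<in> rb n" "1 \<le> p" "p + 1 \<le> n"
  shows "partner (comp P (ee n p)) = reconnect (partner P) (B p) (B (p + 1))"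
proof
  fix v show "partner (comp P (ee n p)) v = reconnect (partner P) (B p) (B (p + 1)) v"
    using partner_comp_ee_T[OF assms] partner_comp_ee_B[OF assms] by (cases v) auto
qed

lemma loops_comp_ee:
  assumes P: "P \<in> rb n" and p: "1 \<le> p" "p + 1 \<le> n" and up: "partner P (B (p + 1)) = T i"
  shows "loops n P (ee n p) = 0"
proof (rule loops_eq_0I)
  note E = ee_rb[OF p]
  have q: "conn P (ee n p) (Mid (p + 1)) (Up i)" by (rule conn_Mid_Up[OF P E up])
  fix k assume k: "1 \<le> k" "k \<le> n"
  consider "k = p + 1" | "k = p" | "k \<noteq> p" "k \<noteq> p + 1" by blast
  then show "\<exists>w. conn P (ee n p) (Mid k) w \<and> is_outer w"
  proof cases
    case 2
    have "conn P (ee n p) (Mid p) (Mid (p + 1))"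
      by (rule conn_Mid_Mid_lower[OF P E]) (use p in \<open>simp add: partner_ee_T[OF p]\<close>)
    then show ?thesis using q 2 conn_trans is_outer_def by blast
  next
    case 3
    then have "partner (ee n p) (T k) = B k" using k by (simp add: partner_ee_T[OF p])
    then show ?thesis using conn_Mid_Low[OF P E] is_outer_def by blast
  qed (use q is_outer_def in blast)
qed

definition has_horizontal :: "diagram \<Rightarrow> bool" where "has_horizontal D \<longleftrightarrow> (\<exists>e\<in>D. horizontal_arc e)"

lemma partner_no_horizontal: assumes "D \<in> rb n" "\<not> has_horizontal D"
  shows "partner D (T i) = T i' \<Longrightarrow> i' = i" "partner D (B j) = B j' \<Longrightarrow> j' = j"
proof -
  show "partner D (T i) = T i' \<Longrightarrow> i' = i"
  proof (rule ccontr)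
    assume a: "partner D (T i) = T i'" "i' \<noteq> i"
    then have "{T i, T i'} \<in> D" using partner_arc[OF assms(1), of "T i"] by simp
    then show False using assms(2) unfolding has_horizontal_def horizontal_arc_def by blast
  qed
  show "partner D (B j) = B j' \<Longrightarrow> j' = j"
  proof (rule ccontr)
    assume a: "partner D (B j) = B j'" "j' \<noteq> j"
    then have "{B j, B j'} \<in> D" using partner_arc[OF assms(1), of "B j"] by simp
    then show False using assms(2) unfolding has_horizontal_def horizontal_arc_def by blast
  qed
qed

lemma no_horizontalI:
  assumes "D \<in> rb n" "\<And>i i'. partner D (T i) = T i' \<Longrightarrow> i' = i"
    "\<And>j j'. partner D (B j) = B j' \<Longrightarrow> j' = j"
  shows "\<not> has_horizontal D"
proof
  assume "has_horizontal D"
  then obtain e where e: "e \<in> D" "horizontal_arc e" unfolding has_horizontal_def by blast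
  obtain u v where uv: "u \<noteq> v" "e = {u, v}" using rb_arcD[OF assms(1) e(1)] by auto
  have p: "partner D u = v" using partner_eqI[OF assms(1), of u v] e(1) uv by simp
  from e(2) obtain i j where "e = {T i, T j} \<or> e = {B i, B j}" unfolding horizontal_arc_def by blast
  then show False
  proof
    assume "e = {T i, T j}"
    then have "(u = T i \<and> v = T j) \<or> (u = T j \<and> v = T i)" using uv by (auto simp: doubleton_eq_iff)
    then show False
    proof
      assume "u = T i \<and> v = T j" then show False using p uv(1) assms(2)[of i j] by simp
    next
      assume "u = T j \<and> v = T i" then show False using p uv(1) assms(2)[of j i] by simp
    qed
  next
    assume "e = {B i, B j}"
    then have "(u = B i \<and> v = B j) \<or> (u = B j \<and> v = B i)" using uv by (auto simp: doubleton_eq_iff)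
    then show False
    proof
      assume "u = B i \<and> v = B j" then show False using p uv(1) assms(3)[of i j] by simp
    next
      assume "u = B j \<and> v = B i" then show False using p uv(1) assms(3)[of j i] by simp
    qed
  qed
qed

lemma has_horizontal_T: "D \<in> rb n \<Longrightarrow> partner D v = T i \<Longrightarrow> v = T k \<Longrightarrow> i \<noteq> k \<Longrightarrow> has_horizontal D"
  using partner_no_horizontal(1) by blast

lemma has_horizontal_B: "D \<in> rb n \<Longrightarrow> partner D v = B i \<Longrightarrow> v = B k \<Longrightarrow> i \<noteq> k \<Longrightarrow> has_horizontal D"
  using partner_no_horizontal(2) by blast

lemma has_horizontal_flip: "has_horizontal (flip D) \<longleftrightarrow> has_horizontal D"
proof -
  have "horizontal_arc (flip_vtx ` e) \<longleftrightarrow> horizontal_arc e" for e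
    unfolding horizontal_arc_def flip_vtx_image_eq by auto
  then show ?thesis unfolding has_horizontal_def flip_def by auto
qed

lemma comp_no_horizontal_T:
  assumes ab: "a \<in> rb n" "b \<in> rb n" and h: "\<not> has_horizontal a" "\<not> has_horizontal b"
    and c: "partner (comp a b) (T i) = T i'"
  shows "i' = i"
proof (cases "partner a (T i)")
  case (T i1)
  then show ?thesis using partner_no_horizontal[OF ab(1) h(1)] partner_comp_T0[OF ab T] c by simp
next
  case (B k)
  show ?thesis
  proof (cases "partner b (T k)")
    case (T k')
    moreover have "k' = k" using T partner_no_horizontal[OF ab(2) h(2)] by blast
    ultimately show ?thesis using partner_comp_T2[OF ab B _ partner_sym[OF ab(1) B]] c by simp
  next
    case (B j)
    then show ?thesis using partner_comp_T1[OF ab \<open>partner a (T i) = B k\<close> B] c by simp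
  qed
qed

lemma comp_no_horizontal:
  assumes ab: "a \<in> rb n" "b \<in> rb n" and h: "\<not> has_horizontal a" "\<not> has_horizontal b"
  shows "\<not> has_horizontal (comp a b)"
proof (rule no_horizontalI[OF comp_rb[OF ab] comp_no_horizontal_T[OF ab h]])
  fix j j' assume "partner (comp a b) (B j) = B j'"
  then have "partner (comp (flip b) (flip a)) (T j) = T j'"
    using partner_flip[OF comp_rb[OF ab]] comp_flip[OF ab] by simp
  then show "j' = j"
    using comp_no_horizontal_T[OF flip_rb[OF ab(2)] flip_rb[OF ab(1)]] h by (simp add: has_horizontal_flip)
qed

lemma idd_no_horizontal: "\<not> has_horizontal (idd n)"
  unfolding idd_eq perm_diagram_eq[OF perm_pair_id] has_horizontal_def horizontal_arc_def by (auto simp: doubleton_eq_iff)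

lemma perm_diagram_no_horizontal:
  assumes "perm_pair n s s'"
  shows "\<not> has_horizontal (perm_diagram n s s')"
  by (rule no_horizontalI[OF perm_diagram_rb[OF assms]])
     (auto simp: partner_perm_diagram[OF assms] perm_partner_def split: if_splits)

lemma perms_no_horizontal: "D \<in> perms n \<Longrightarrow> \<not> has_horizontal D"
  unfolding perms_def has_horizontal_def vertical_arc_def horizontal_arc_def by (auto simp: doubleton_eq_iff)

lemma gg_no_horizontal: "1 \<le> p \<Longrightarrow> p + 1 \<le> n \<Longrightarrow> \<not> has_horizontal (gg n p)"
  using gg_eq perm_diagram_no_horizontal[OF perm_pair_transpose] by simp

lemma uu_no_horizontal: "\<not> has_horizontal (uu n m)"
  by (rule no_horizontalI[OF uu_rb]) (auto simp: partner_uu uu_partner_def split: if_splits)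

lemma ee_has_horizontal: "has_horizontal (ee n p)"
  unfolding has_horizontal_def horizontal_arc_def ee_def by blast


lemma finite_verts: "finite (verts n)"
proof -
  have "verts n \<subseteq> T ` {1..n} \<union> B ` {1..n}"
  proof
    fix x assume "x \<in> verts n"
    then obtain i where "1 \<le> i" "i \<le> n" "x = T i \<or> x = B i" unfolding verts_def by blast
    then show "x \<in> T ` {1..n} \<union> B ` {1..n}" by auto
  qed
  moreover have "finite (T ` {1..n} \<union> B ` {1..n})" by simp
  ultimately show ?thesis using finite_subset by blast
qed

lemma finite_rb: "finite (rb n)"
proof -
  have "rb n \<subseteq> Pow (Pow (verts n))"
  proof
    fix D assume D: "D \<in> rb n"
    have "\<And>e. e \<in> D \<Longrightarrow> e \<subseteq> verts n"
    proof -
      fix e assume "e \<in> D"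
      then obtain u v where "u \<in> verts n" "v \<in> verts n" "e = {u, v}" using rb_arcD[OF D] by metis
      then show "e \<subseteq> verts n" by simp
    qed
    then show "D \<in> Pow (Pow (verts n))" by blast
  qed
  moreover have "finite (Pow (Pow (verts n)))" using finite_verts by simp
  ultimately show ?thesis by (rule finite_subset)
qed

lemma mult_basis:
  fixes x :: "'k::field"
  assumes "a \<in> rb n" "b \<in> rb n"
  shows "mult x n (basis a) (basis b) = (\<lambda>c. if c = comp a b then x ^ loops n a b else 0)"
proof
  fix c
  define v where "v = (if comp a b = c then x ^ loops n a b else 0)"
  have row: "(\<Sum>b'\<in>rb n. if comp a' b' = c then basis a a' * basis b b' * x ^ loops n a' b' else 0)
      = (if a' = a then v else 0)" for a'
  proof (cases "a' = a")
    case True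
    have "(\<Sum>b'\<in>rb n. if comp a' b' = c then basis a a' * basis b b' * x ^ loops n a' b' else 0)
        = (\<Sum>b'\<in>rb n. if b' = b then v else 0)"
      using True unfolding basis_def v_def by (intro sum.cong refl) (simp cong: if_cong)
    also have "\<dots> = v" using assms(2) by (simp add: sum.delta[OF finite_rb])
    finally show ?thesis using True by simp
  qed (simp add: basis_def cong: if_cong)
  have "mult x n (basis a) (basis b) c = (\<Sum>a'\<in>rb n. if a' = a then v else 0)"
    unfolding mult_def row ..
  also have "\<dots> = v" using assms(1) by (simp add: sum.delta[OF finite_rb])
  finally show "mult x n (basis a) (basis b) c = (if c = comp a b then x ^ loops n a b else 0)"
    unfolding v_def by auto
qed


lemma mult_basis_loop_free:
  assumes "a \<in> rb n" "b \<in> rb n" "comp a b = c" "loops n a b = 0"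
  shows "mult x n (basis a) (basis b) = basis c"
proof -
  have "mult x n (basis a) (basis b) = (\<lambda>c'. if c' = comp a b then x ^ loops n a b else 0)"
    by (rule mult_basis[OF assms(1,2)])
  also have "\<dots> = basis c" unfolding basis_def assms(3,4) by (simp add: fun_eq_iff)
  finally show ?thesis .
qed

lemma mult_basis_triple: assumes "P \<in> rb n" "Y \<in> rb n" "Q \<in> rb n"
  and "loops n P Y = 0" "loops n (comp P Y) Q = 0" "comp (comp P Y) Q = D"
  shows "mult x n (mult x n (basis P) (basis Y)) (basis Q) = basis D"
proof -
  have 1: "mult x n (basis P) (basis Y) = basis (comp P Y)"
    by (rule mult_basis_loop_free[OF assms(1,2) refl assms(4)])
  show ?thesis unfolding 1 by (rule mult_basis_loop_free[OF comp_rb[OF assms(1,2)] assms(3,6,5)])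
qed

lemma basis_alg: "D \<in> rb n \<Longrightarrow> basis D \<in> alg n"
  unfolding alg_def basis_def by auto

lemma basis_lalg: "D \<in> rb n \<Longrightarrow> \<not> has_horizontal D \<Longrightarrow> basis D \<in> lalg n"
  unfolding lalg_def alg_def basis_def has_horizontal_def by auto

lemma mult_alg: assumes "f \<in> alg n" "g \<in> alg n" shows "mult x n f g \<in> alg n"
  unfolding alg_def mult_def
proof (intro CollectI allI impI)
  fix c assume c: "c \<notin> rb n"
  have "\<And>a b. a \<in> rb n \<Longrightarrow> b \<in> rb n \<Longrightarrow> comp a b \<noteq> c" using comp_rb c by blast
  then show "(\<Sum>a\<in>rb n. \<Sum>b\<in>rb n. if comp a b = c then f a * g b * x ^ loops n a b else 0) = 0"
    by simp
qed

lemma mult_lalg: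
  assumes "f \<in> lalg n" "g \<in> lalg n"
  shows "mult x n f g \<in> lalg n"
proof -
  have fg: "f a * g b = 0" if "a \<in> rb n" "b \<in> rb n" "has_horizontal (comp a b)" for a b
  proof -
    have "has_horizontal a \<or> has_horizontal b" using comp_no_horizontal[OF that(1,2)] that(3) by blast
    then show ?thesis using assms unfolding lalg_def has_horizontal_def by auto
  qed
  have "mult x n f g c = 0" if "\<exists>e\<in>c. horizontal_arc e" for c
    unfolding mult_def by (intro sum.neutral ballI) (use fg that in \<open>auto simp: has_horizontal_def\<close>)
  then show ?thesis using mult_alg assms unfolding lalg_def by blast
qed


lemma subalg_alg: assumes "G \<subseteq> alg n" "f \<in> subalg x n G" shows "f \<in> alg n"
  using assms(2)
proof (induction rule: subalg.induct)
  case (gen g) then show ?case using assms(1) by blast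
next
  case one
  have "idd n \<in> rb n" unfolding idd_eq by (rule perm_diagram_rb[OF perm_pair_id])
  then show ?case by (rule basis_alg)
next
  case (smult f r) then show ?case unfolding alg_def by auto
next
  case (add f g) then show ?case unfolding alg_def by auto
next
  case (mul f g) then show ?case using mult_alg by blast
qed

lemma subalg_lalg: assumes "G \<subseteq> lalg n" "f \<in> subalg x n G" shows "f \<in> lalg n"
  using assms(2)
proof (induction rule: subalg.induct)
  case (gen g) then show ?case using assms(1) by blast
next
  case one
  have "idd n \<in> rb n" unfolding idd_eq by (rule perm_diagram_rb[OF perm_pair_id])
  then show ?case using basis_lalg idd_no_horizontal by blast
next
  case (smult f r) then show ?case unfolding lalg_def alg_def by auto
next
  case (add f g) then show ?case unfolding lalg_def alg_def by auto
next
  case (mul f g) then show ?case using mult_lalg by blast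
qed

lemma sum_in_subalg: assumes "finite S" "\<And>D. D \<in> S \<Longrightarrow> basis D \<in> subalg x n G"
  shows "(\<lambda>c. \<Sum>D\<in>S. f D * basis D c) \<in> subalg x n G"
  using assms
proof (induction S rule: finite_induct)
  case empty
  have "(\<lambda>c. 0 * basis (idd n) c) \<in> subalg x n G" by (rule subalg.smult[OF subalg.one])
  then show ?case by simp
next
  case (insert D S)
  have "(\<lambda>c. f D * basis D c) \<in> subalg x n G" using insert by (intro subalg.smult) auto
  moreover have "(\<lambda>c. \<Sum>D\<in>S. f D * basis D c) \<in> subalg x n G" using insert by auto
  ultimately have "(\<lambda>c. f D * basis D c + (\<Sum>D\<in>S. f D * basis D c)) \<in> subalg x n G"
    by (rule subalg.add)
  then show ?case using insert by simp
qed

lemma expansion_in_subalg: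
  assumes S: "finite S" "\<And>D. D \<in> S \<Longrightarrow> basis D \<in> subalg x n G" and f: "\<And>c. c \<notin> S \<Longrightarrow> f c = 0"
  shows "f \<in> subalg x n G"
proof -
  have "f = (\<lambda>c. \<Sum>D\<in>S. f D * basis D c)"
  proof
    fix c
    have "(\<Sum>D\<in>S. f D * basis D c) = (\<Sum>D\<in>S. if D = c then f c else 0)"
      unfolding basis_def by (intro sum.cong) auto
    also have "\<dots> = f c" using S(1) f by (simp add: sum.delta)
    finally show "f c = (\<Sum>D\<in>S. f D * basis D c)" by simp
  qed
  then show ?thesis using sum_in_subalg[OF S] by metis
qed

section \<open>Factoring off a column\<close>

text \<open>The diagrams in padded (n - 1) n are the images of eps n.\<close>

definition padded :: "nat \<Rightarrow> nat \<Rightarrow> diagram set" where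
  "padded m n = {D \<in> rb n. \<forall>k. m < k \<and> k \<le> n \<longrightarrow> partner D (T k) = B k}"

definition factorisation :: "nat \<Rightarrow> nat \<Rightarrow> diagram \<Rightarrow> diagram \<Rightarrow> diagram \<Rightarrow> diagram \<Rightarrow> bool" where
  "factorisation n p D P y Q \<longleftrightarrow> P \<in> padded p n \<and> Q \<in> padded p n \<and> y \<in> rb n \<and> loops n P y = 0
     \<and> loops n (comp P y) Q = 0 \<and> comp (comp P y) Q = D"

lemma padded_rb: "D \<in> padded m n \<Longrightarrow> D \<in> rb n"
  unfolding padded_def by blast

lemma paddedD: "D \<in> padded m n \<Longrightarrow> m < k \<Longrightarrow> k \<le> n \<Longrightarrow> partner D (T k) = B k"
  unfolding padded_def by blast

lemma paddedD': "D \<in> padded m n \<Longrightarrow> m < k \<Longrightarrow> k \<le> n \<Longrightarrow> partner D (B k) = T k"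
proof -
  assume a: "D \<in> padded m n" "m < k" "k \<le> n"
  have "partner D (T k) = B k" using paddedD[OF a] .
  then show ?thesis using partner_partner[OF padded_rb[OF a(1)], of "T k"] by simp
qed

lemma padded_partner: assumes D: "D \<in> padded m n" and k: "m < k" "k \<le> n"
  shows "partner D v = T k \<Longrightarrow> v = B k" "partner D v = B k \<Longrightarrow> v = T k"
proof -
  have Drb: "D \<in> rb n" using padded_rb[OF D] .
  have iv: "partner D (partner D v) = v" using partner_partner[OF Drb] .
  show "partner D v = T k \<Longrightarrow> v = B k" using paddedD[OF D k] iv by simp
  show "partner D v = B k \<Longrightarrow> v = T k" using paddedD'[OF D k] iv by simp
qed

lemma padded_Suc: "D \<in> padded (Suc m) n \<Longrightarrow> partner D (T (Suc m)) = B (Suc m) \<Longrightarrow> D \<in> padded m n"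
  unfolding padded_def by (auto intro: Suc_lessI)

lemma padded_self: "D \<in> rb n \<Longrightarrow> D \<in> padded n n"
  unfolding padded_def by auto

lemma padded_0: assumes "D \<in> padded 0 n" shows "D = idd n"
proof (rule diagram_eqI[OF padded_rb[OF assms]])
  show "idd n \<in> rb n" unfolding idd_eq by (rule perm_diagram_rb[OF perm_pair_id])
  fix v show "partner D v = partner (idd n) v"
  proof (cases v)
    case (T k)
    then show ?thesis unfolding idd_eq partner_perm_diagram[OF perm_pair_id] perm_partner_def
      using paddedD[OF assms, of k] partner_outside[OF padded_rb[OF assms], of v] by auto
  next
    case (B k)
    then show ?thesis unfolding idd_eq partner_perm_diagram[OF perm_pair_id] perm_partner_def
      using paddedD'[OF assms, of k] partner_outside[OF padded_rb[OF assms], of v] by auto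
  qed
qed

lemma perm_diagram_padded:
  assumes "perm_pair n s s'" "\<And>k. m < k \<Longrightarrow> s k = k"
  shows "perm_diagram n s s' \<in> padded m n"
  unfolding padded_def using perm_diagram_rb[OF assms(1)] partner_perm_diagram_T[OF assms(1)] assms(2) by auto

lemma flip_padded: assumes "D \<in> padded m n" shows "flip D \<in> padded m n"
  using assms flip_rb[OF padded_rb[OF assms]] paddedD'[OF assms]
  unfolding padded_def by (auto simp: partner_flip[OF padded_rb[OF assms]])

text \<open>Flipping a factorisation reverses the order of its factors; since the outer factor is a
  permutation, the original bracketing is restored by associativity with permutations.\<close>

lemma factorisation_flip:
  assumes f: "factorisation n p (flip D) P y (perm_diagram n s s')" and s: "perm_pair n s s'"
    and y: "flip y = y" and D: "D \<in> rb n"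
  shows "factorisation n p D (perm_diagram n s' s) y (flip P)"
proof -
  have P: "P \<in> padded p n" and Q: "perm_diagram n s s' \<in> padded p n" and Y: "y \<in> rb n"
    and l: "loops n P y = 0" and DPyQ: "comp (comp P y) (perm_diagram n s s') = flip D"
    using f unfolding factorisation_def by auto
  note Prb = padded_rb[OF P] and s' = perm_pair_sym[OF s]
  have "D = flip (comp (comp P y) (perm_diagram n s s'))" using DPyQ by simp
  also have "\<dots> = comp (perm_diagram n s' s) (comp y (flip P))"
    using comp_flip[OF comp_rb[OF Prb Y] perm_diagram_rb[OF s]] comp_flip[OF Prb Y] flip_perm_diagram[OF s] y
    by simp
  also have "\<dots> = comp (comp (perm_diagram n s' s) y) (flip P)"
    using comp_perm_left_assoc[OF Y flip_rb[OF Prb] s'] by simp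
  finally have "comp (comp (perm_diagram n s' s) y) (flip P) = D" ..
  moreover have "loops n (comp (perm_diagram n s' s) y) (flip P) = 0"
    using loops_perm_left_assoc[OF Y flip_rb[OF Prb] s'] loops_flip[OF Prb Y] y l by simp
  moreover have "perm_diagram n s' s \<in> padded p n"
    using flip_padded[OF Q] flip_perm_diagram[OF s] by simp
  ultimately show ?thesis
    unfolding factorisation_def using flip_padded[OF P] Y comp_perm_left(2)[OF Y s'] by simp
qed

lemma factor_vertical_top:
  assumes D: "D \<in> padded m n" and m: "m \<le> n" and j: "partner D (T m) = B j" "1 \<le> j" "j < m"
  shows "\<exists>P s s'. perm_pair n s s' \<and> factorisation n (m - 1) D P (gg n (m - 1)) (perm_diagram n s s')
             \<and> (\<not> has_horizontal D \<longrightarrow> \<not> has_horizontal P)"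
proof -
  define p where "p = m - 1"
  have pm: "m = p + 1" "1 \<le> p" "j \<le> p" using j unfolding p_def by auto
  define \<sigma> where "\<sigma> = transpose j p"
  define \<gamma> where "\<gamma> = transpose p m"
  have \<sigma>: "perm_pair n \<sigma> \<sigma>" unfolding \<sigma>_def by (rule perm_pair_transpose) (use j m pm in auto)
  have \<gamma>: "perm_pair n \<gamma> \<gamma>" unfolding \<gamma>_def by (rule perm_pair_transpose) (use m pm in auto)
  have G: "perm_diagram n \<gamma> \<gamma> = gg n p" unfolding \<gamma>_def using gg_eq[of p n] pm m by simp
  note Drb = padded_rb[OF D]
  define X where "X = comp D (perm_diagram n \<sigma> \<sigma>)"
  define P where "P = comp X (perm_diagram n \<gamma> \<gamma>)"
  have X: "X \<in> rb n" unfolding X_def by (rule comp_rb[OF Drb perm_diagram_rb[OF \<sigma>]])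
  have P: "P \<in> rb n" unfolding P_def by (rule comp_rb[OF X perm_diagram_rb[OF \<gamma>]])
  have PG: "comp P (perm_diagram n \<gamma> \<gamma>) = X"
    unfolding P_def by (rule comp_perm_right_cancel[OF X \<gamma>])
  have "comp (comp P (perm_diagram n \<gamma> \<gamma>)) (perm_diagram n \<sigma> \<sigma>) = D"
    unfolding PG X_def by (rule comp_perm_right_cancel[OF Drb \<sigma>])
  moreover have "loops n P (perm_diagram n \<gamma> \<gamma>) = 0" by (rule comp_perm_right(2)[OF P \<gamma>])
  moreover have "loops n (comp P (perm_diagram n \<gamma> \<gamma>)) (perm_diagram n \<sigma> \<sigma>) = 0"
    unfolding PG by (rule comp_perm_right(2)[OF X \<sigma>])
  moreover have "P \<in> padded p n"
  proof -
    have "partner X (T k) = relabel_bottom \<sigma> (partner D (T k))" for k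
      unfolding X_def comp_perm_right(1)[OF Drb \<sigma>] by simp
    then have "partner P (T k) = relabel_bottom \<gamma> (relabel_bottom \<sigma> (partner D (T k)))" for k
      unfolding P_def comp_perm_right(1)[OF X \<gamma>] by simp
    moreover have "relabel_bottom \<gamma> (relabel_bottom \<sigma> (partner D (T k))) = B k" if "p < k" "k \<le> n" for k
      using that paddedD[OF D, of k] j(1) pm by (cases "k = m") (auto simp: \<sigma>_def \<gamma>_def)
    ultimately show ?thesis using P unfolding padded_def by auto
  qed
  moreover have "perm_diagram n \<sigma> \<sigma> \<in> padded p n"
    by (rule perm_diagram_padded[OF \<sigma>]) (use pm in \<open>auto simp: \<sigma>_def\<close>)
  moreover have "\<not> has_horizontal P" if "\<not> has_horizontal D"
    unfolding P_def X_def
    using comp_no_horizontal[OF Drb perm_diagram_rb[OF \<sigma>] that perm_diagram_no_horizontal[OF \<sigma>]]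
    by (intro comp_no_horizontal[OF comp_rb[OF Drb perm_diagram_rb[OF \<sigma>]] perm_diagram_rb[OF \<gamma>]]
          perm_diagram_no_horizontal[OF \<gamma>])
  ultimately show ?thesis
    unfolding factorisation_def p_def[symmetric] G[symmetric] using \<sigma> perm_diagram_rb[OF \<gamma>] by blast
qed

lemma factor_vertical_bottom:
  assumes D: "D \<in> padded m n" and m: "m \<le> n" and j: "partner D (B m) = T j" "1 \<le> j" "j < m"
  shows "\<exists>P Q. factorisation n (m - 1) D P (gg n (m - 1)) Q
             \<and> (\<not> has_horizontal D \<longrightarrow> \<not> has_horizontal P \<and> \<not> has_horizontal Q)"
proof -
  have "partner (flip D) (T m) = B j" using partner_flip[OF padded_rb[OF D]] j(1) by simp
  then obtain P s s' where s: "perm_pair n s s'"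
    and f: "factorisation n (m - 1) (flip D) P (gg n (m - 1)) (perm_diagram n s s')"
    and h: "\<not> has_horizontal (flip D) \<longrightarrow> \<not> has_horizontal P"
    using factor_vertical_top[OF flip_padded[OF D] m] j by blast
  have "flip (gg n (m - 1)) = gg n (m - 1)" using flip_gg[of "m - 1" n] j m by simp
  then have "factorisation n (m - 1) D (perm_diagram n s' s) (gg n (m - 1)) (flip P)"
    by (rule factorisation_flip[OF f s _ padded_rb[OF D]])
  then show ?thesis
    using h perm_diagram_no_horizontal[OF perm_pair_sym[OF s]]
    by (intro exI[of _ "perm_diagram n s' s"] exI[of _ "flip P"]) (simp add: has_horizontal_flip)
qed

text \<open>P joins (p+1) to (p+1)' and the former partner of (p+1) to p'; multiplying by e(p) on the right
  undoes this.\<close>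

lemma ee_right_factor:
  assumes X: "X \<in> padded (p + 1) n" and p: "1 \<le> p" "p + 1 \<le> n" and arc: "partner X (B p) = B (p + 1)"
  shows "\<exists>P \<in> padded p n. comp P (ee n p) = X \<and> loops n P (ee n p) = 0"
proof -
  note Xrb = padded_rb[OF X]
  have Xq: "partner X (B (p + 1)) = B p" by (rule partner_sym[OF Xrb arc])
  define \<pi> where "\<pi> = reconnect (partner X) (B (p + 1)) (T (p + 1))"
  have \<pi>: "partner_map n \<pi>"
    unfolding \<pi>_def by (rule partner_map_reconnect[OF partner_map_partner[OF Xrb]]) (use p Xq in simp_all)
  define P where "P = arcs_of \<pi>"
  have P: "P \<in> rb n" and ptP: "partner P = \<pi>"
    unfolding P_def using arcs_of_rb[OF \<pi>] partner_arcs_of[OF \<pi>] by auto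
  have "reconnect \<pi> (B p) (B (p + 1)) = partner X"
    unfolding \<pi>_def by (rule reconnect_undo[OF partner_partner[OF Xrb] arc]) auto
  then have "comp P (ee n p) = X"
    by (intro diagram_eqI[OF comp_rb[OF P ee_rb[OF p]] Xrb]) (simp add: partner_comp_ee[OF P p] ptP)
  moreover have "loops n P (ee n p) = 0"
    by (rule loops_comp_ee[OF P p]) (simp add: ptP \<pi>_def reconnect_def)
  moreover have "P \<in> padded p n"
    unfolding padded_def
  proof (intro CollectI conjI allI impI P)
    fix k assume k: "p < k \<and> k \<le> n"
    show "partner P (T k) = B k"
    proof (cases "k = p + 1")
      case False
      then have "partner X (T k) = B k" using paddedD[OF X] k by simp
      moreover have "partner X (T (p + 1)) \<noteq> T k"
        using calculation partner_sym[OF Xrb, of "T (p + 1)" "T k"] by auto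
      ultimately show ?thesis using False Xq unfolding ptP \<pi>_def reconnect_def by auto
    qed (simp add: ptP \<pi>_def reconnect_def)
  qed
  ultimately show ?thesis by blast
qed

lemma factor_bottom_arc:
  assumes D: "D \<in> padded m n" and m: "m \<le> n" and j: "partner D (B m) = B j" "1 \<le> j" "j < m"
  shows "\<exists>P s s'. perm_pair n s s' \<and> factorisation n (m - 1) D P (ee n (m - 1)) (perm_diagram n s s')"
proof -
  define p where "p = m - 1"
  have pm: "m = p + 1" "1 \<le> p" "j \<le> p" using j unfolding p_def by auto
  define \<sigma> where "\<sigma> = transpose j p"
  have \<sigma>: "perm_pair n \<sigma> \<sigma>" unfolding \<sigma>_def by (rule perm_pair_transpose) (use j m pm in auto)
  note Drb = padded_rb[OF D]
  define X where "X = comp D (perm_diagram n \<sigma> \<sigma>)"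
  have X: "X \<in> rb n" unfolding X_def by (rule comp_rb[OF Drb perm_diagram_rb[OF \<sigma>]])
  have ptX: "partner X v = relabel_bottom \<sigma> (partner D (relabel_bottom \<sigma> v))" for v
    unfolding X_def by (rule comp_perm_right(1)[OF Drb \<sigma>])
  have "X \<in> padded m n" using X ptX paddedD[OF D] pm unfolding padded_def by (auto simp: \<sigma>_def)
  moreover have "partner X (B p) = B m" using ptX[of "B p"] partner_sym[OF Drb j(1)] pm by (simp add: \<sigma>_def)
  ultimately obtain P where P: "P \<in> padded p n" "comp P (ee n p) = X" "loops n P (ee n p) = 0"
    using ee_right_factor[of X p n] pm m by auto
  have "comp (comp P (ee n p)) (perm_diagram n \<sigma> \<sigma>) = D"
    unfolding P(2) X_def by (rule comp_perm_right_cancel[OF Drb \<sigma>])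
  moreover have "loops n (comp P (ee n p)) (perm_diagram n \<sigma> \<sigma>) = 0"
    unfolding P(2) by (rule comp_perm_right(2)[OF X \<sigma>])
  moreover have "perm_diagram n \<sigma> \<sigma> \<in> padded p n"
    by (rule perm_diagram_padded[OF \<sigma>]) (use pm in \<open>auto simp: \<sigma>_def\<close>)
  ultimately show ?thesis
    unfolding factorisation_def p_def[symmetric] using \<sigma> P ee_rb[of p n] pm m by auto
qed

lemma factor_top_arc:
  assumes D: "D \<in> padded m n" and m: "m \<le> n" and i: "partner D (T m) = T i" "1 \<le> i" "i < m"
  shows "\<exists>P Q. factorisation n (m - 1) D P (ee n (m - 1)) Q"
proof -
  have "partner (flip D) (B m) = B i" using partner_flip[OF padded_rb[OF D]] i(1) by simp
  then obtain P s s' where s: "perm_pair n s s'"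
    and f: "factorisation n (m - 1) (flip D) P (ee n (m - 1)) (perm_diagram n s s')"
    using factor_bottom_arc[OF flip_padded[OF D] m] i by blast
  have "flip (ee n (m - 1)) = ee n (m - 1)" using flip_ee[of "m - 1" n] i m by simp
  then show ?thesis using factorisation_flip[OF f s _ padded_rb[OF D]] by blast
qed

lemma factor_isolated:
  assumes D: "D \<in> padded m n" and m: "1 \<le> m" "m \<le> n"
    and iso: "partner D (T m) = T m" "partner D (B m) = B m"
  shows "\<exists>P. factorisation n (m - 1) D P (uu n m) (perm_diagram n id id)
             \<and> (\<not> has_horizontal D \<longrightarrow> \<not> has_horizontal P)"
proof -
  note Drb = padded_rb[OF D] and U = uu_rb[of n m] and Q = perm_diagram_rb[OF perm_pair_id]
  define \<pi> where "\<pi> = reconnect (partner D) (T m) (B m)"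
  have \<pi>: "partner_map n \<pi>"
    unfolding \<pi>_def by (rule partner_map_reconnect[OF partner_map_partner[OF Drb]]) (use m iso in auto)
  define P where "P = arcs_of \<pi>"
  have P: "P \<in> rb n" unfolding P_def by (rule arcs_of_rb[OF \<pi>])
  have ptP: "partner P v = (if v = T m then B m else if v = B m then T m else partner D v)" for v
    unfolding P_def partner_arcs_of[OF \<pi>] unfolding \<pi>_def by (rule reconnect_isolated[OF iso])
  have "partner D v = B m \<longleftrightarrow> v = B m" for v using partner_partner[OF Drb, of v] iso by auto
  then have PU: "comp P (uu n m) = D"
    by (intro diagram_eqI[OF comp_rb[OF P U] Drb]) (auto simp: partner_comp_uu[OF P m] ptP iso)
  have "comp (comp P (uu n m)) (perm_diagram n id id) = D"
    by (rule diagram_eqI[OF _ Drb]) (use comp_rb[OF comp_rb[OF P U] Q] in \<open>auto simp: PU comp_perm_right(1)[OF Drb perm_pair_id]\<close>)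
  moreover have "loops n P (uu n m) = 0" by (rule loops_comp_uu[OF P]) (simp add: ptP)
  moreover have "loops n (comp P (uu n m)) (perm_diagram n id id) = 0"
    unfolding PU by (rule comp_perm_right(2)[OF Drb perm_pair_id])
  moreover have "P \<in> padded (m - 1) n"
    using P paddedD[OF D] unfolding padded_def by (auto simp: ptP)
  moreover have "perm_diagram n id id \<in> padded (m - 1) n"
    by (rule perm_diagram_padded[OF perm_pair_id]) simp
  moreover have "\<not> has_horizontal P" if "\<not> has_horizontal D"
    by (rule no_horizontalI[OF P]) (auto simp: ptP dest: partner_no_horizontal[OF Drb that] split: if_splits)
  ultimately show ?thesis unfolding factorisation_def using U by blast
qed

lemma padded_column_partner:
  assumes D: "D \<in> padded m n" and v: "v = T m \<or> v = B m" and w: "partner D v = T k \<or> partner D v = B k"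
    and "partner D v \<noteq> v" "k \<noteq> m"
  shows "1 \<le> k \<and> k < m"
proof -
  have "1 \<le> k \<and> k \<le> n" using partner_verts(2)[OF padded_rb[OF D] assms(4)] w by auto
  moreover have "\<not> m < k" using padded_partner[OF D] v w \<open>k \<noteq> m\<close> calculation by blast
  ultimately show ?thesis using \<open>k \<noteq> m\<close> by simp
qed

lemma factor_column:
  assumes D: "D \<in> padded m n" and m: "1 \<le> m" "m \<le> n" and nb: "partner D (T m) \<noteq> B m"
  shows "\<exists>P Q y. factorisation n (m - 1) D P y Q
           \<and> (y = uu n m \<or> 2 \<le> m \<and> (y = gg n (m - 1) \<or> y = ee n (m - 1)))
           \<and> (\<not> has_horizontal D \<longrightarrow> \<not> has_horizontal P \<and> \<not> has_horizontal Q \<and> \<not> has_horizontal y)"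
proof -
  note Drb = padded_rb[OF D]
  have below: "1 \<le> k \<and> k < m"
    if "v = T m \<or> v = B m" "partner D v = T k \<or> partner D v = B k" "partner D v \<noteq> v" "k \<noteq> m" for v k
    by (rule padded_column_partner[OF D that])
  have gg: "\<not> has_horizontal (gg n (m - 1))" if "2 \<le> m" using gg_no_horizontal[of "m - 1" n] that m by simp
  have Bm: "partner D (B m) \<noteq> T m" using partner_sym[OF Drb, of "B m" "T m"] nb by auto
  consider (vertical_top) j where "partner D (T m) = B j" "j \<noteq> m"
    | (top_arc) i where "partner D (T m) = T i" "i \<noteq> m"
    | (vertical_bottom) j where "partner D (T m) = T m" "partner D (B m) = T j" "j \<noteq> m"
    | (bottom_arc) j where "partner D (T m) = T m" "partner D (B m) = B j" "j \<noteq> m"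
    | (isolated) "partner D (T m) = T m" "partner D (B m) = B m"
    using nb Bm by (cases "partner D (T m)"; cases "partner D (B m)") auto
  then show ?thesis
  proof cases
    case (vertical_top j)
    then have "1 \<le> j \<and> j < m" using below[of "T m" j] by auto
    then show ?thesis
      using factor_vertical_top[OF D m(2) vertical_top(1)] gg perm_diagram_no_horizontal by fastforce
  next
    case (top_arc i)
    then have "1 \<le> i \<and> i < m" "has_horizontal D"
      using below[of "T m" i] has_horizontal_T[OF Drb top_arc(1) refl] by auto
    then show ?thesis using factor_top_arc[OF D m(2) top_arc(1)] by fastforce
  next
    case (vertical_bottom j)
    then have "1 \<le> j \<and> j < m" using below[of "B m" j] by auto
    then show ?thesis using factor_vertical_bottom[OF D m(2) vertical_bottom(2)] gg by fastforce
  next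
    case (bottom_arc j)
    then have "1 \<le> j \<and> j < m" "has_horizontal D"
      using below[of "B m" j] has_horizontal_B[OF Drb bottom_arc(2) refl] by auto
    then show ?thesis using factor_bottom_arc[OF D m(2) bottom_arc(2)] by fastforce
  next
    case isolated
    then show ?thesis
      using factor_isolated[OF D m isolated] uu_no_horizontal perm_diagram_no_horizontal[OF perm_pair_id]
      by fastforce
  qed
qed

section \<open>Generation\<close>

lemma perm_diagram_in_subalg: assumes "basis ` perms n \<subseteq> G" "perm_pair n s s'"
  shows "basis (perm_diagram n s s') \<in> subalg x n G"
  using assms perm_diagram_perms[OF assms(2)] by (intro subalg.gen) blast

lemma triple_product_in_subalg:
  assumes "basis P \<in> subalg x n G" "basis Y \<in> subalg x n G" "basis Q \<in> subalg x n G"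
    "P \<in> rb n" "Y \<in> rb n" "Q \<in> rb n"
    "loops n P Y = 0" "loops n (comp P Y) Q = 0" "comp (comp P Y) Q = D"
  shows "basis D \<in> subalg x n G"
proof -
  have "mult x n (mult x n (basis P) (basis Y)) (basis Q) \<in> subalg x n G"
    using assms(1-3) by (intro subalg.mul)
  moreover have "mult x n (mult x n (basis P) (basis Y)) (basis Q) = basis D"
    by (rule mult_basis_triple[OF assms(4-9)])
  ultimately show ?thesis by simp
qed

lemma factorisation_in_subalg:
  assumes "factorisation n p D P y Q"
    and "basis P \<in> subalg x n G" "basis y \<in> subalg x n G" "basis Q \<in> subalg x n G"
  shows "basis D \<in> subalg x n G"
  using assms triple_product_in_subalg[of P x n G y Q] padded_rb unfolding factorisation_def by blast

lemma conjugate_in_subalg: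
  assumes perms: "basis ` perms n \<subseteq> G" and s: "perm_pair n s s"
    and Y: "Y \<in> rb n" "basis Y \<in> subalg x n G" and D: "D \<in> rb n"
    and conj: "\<And>v. relabel_bottom s (relabel_top s (partner Y (relabel_top s (relabel_bottom s v)))) = partner D v"
  shows "basis D \<in> subalg x n G"
proof -
  note S = perm_diagram_rb[OF s]
  have X: "comp (perm_diagram n s s) Y \<in> rb n" by (rule comp_rb[OF S Y(1)])
  have "comp (comp (perm_diagram n s s) Y) (perm_diagram n s s) = D"
    by (rule diagram_eqI[OF comp_rb[OF X S] D])
       (simp add: comp_perm_right(1)[OF X s] comp_perm_left(1)[OF Y(1) s] conj)
  then show ?thesis
    using triple_product_in_subalg[OF perm_diagram_in_subalg[OF perms s] Y(2) perm_diagram_in_subalg[OF perms s]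
        S Y(1) S comp_perm_left(2)[OF Y(1) s] comp_perm_right(2)[OF X s]] by blast
qed

lemma uu_in_subalg:
  assumes perms: "basis ` perms n \<subseteq> G" and u: "basis (uu n n) \<in> G" and m: "1 \<le> m" "m \<le> n"
  shows "basis (uu n m) \<in> subalg x n G"
proof (rule conjugate_in_subalg[OF perms _ uu_rb subalg.gen[OF u] uu_rb])
  show "perm_pair n (transpose m n) (transpose m n)" by (rule perm_pair_transpose) (use m in auto)
  fix v show "relabel_bottom (transpose m n) (relabel_top (transpose m n) (partner (uu n n)
      (relabel_top (transpose m n) (relabel_bottom (transpose m n) v)))) = partner (uu n m) v"
    using m by (cases v) (auto simp: partner_uu uu_partner_def transpose_def)
qed

lemma ee_in_subalg:
  assumes perms: "basis ` perms n \<subseteq> G" and e: "basis (ee n (n - 1)) \<in> G"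
  shows "1 \<le> p \<Longrightarrow> p + 1 \<le> n \<Longrightarrow> basis (ee n p) \<in> subalg x n G"
proof (induction "n - 1 - p" arbitrary: p)
  case 0
  then have "p = n - 1" by simp
  then show ?case using e by (simp add: subalg.gen)
next
  case (Suc d)
  then have p: "1 \<le> p" "p + 2 \<le> n" by auto
  show ?case
  proof (rule conjugate_in_subalg[OF perms _ ee_rb _ ee_rb])
    show "perm_pair n (transpose p (p + 2)) (transpose p (p + 2))" by (rule perm_pair_transpose) (use p in auto)
    show "basis (ee n (p + 1)) \<in> subalg x n G" using Suc by simp
    fix v show "relabel_bottom (transpose p (p + 2)) (relabel_top (transpose p (p + 2)) (partner (ee n (p + 1))
        (relabel_top (transpose p (p + 2)) (relabel_bottom (transpose p (p + 2)) v)))) = partner (ee n p) v"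
      using p by (cases v) (auto simp: partner_ee ee_partner_def transpose_def)
  qed (use p in auto)
qed

text \<open>With the flag rook set, only diagrams without horizontal arcs are treated, and no e(p) is
  needed.\<close>

lemma padded_in_subalg:
  assumes perms: "basis ` perms n \<subseteq> G" and u: "basis (uu n n) \<in> G"
    and e: "\<And>p. \<not> rook \<Longrightarrow> 1 \<le> p \<Longrightarrow> p + 1 \<le> n \<Longrightarrow> basis (ee n p) \<in> subalg x n G"
  shows "m \<le> n \<Longrightarrow> D \<in> padded m n \<Longrightarrow> (rook \<longrightarrow> \<not> has_horizontal D) \<Longrightarrow> basis D \<in> subalg x n G"
proof (induction m arbitrary: D)
  case 0
  then show ?case using padded_0 subalg.one by metis
next
  case (Suc m)
  show ?case
  proof (cases "partner D (T (Suc m)) = B (Suc m)")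
    case True
    then show ?thesis using Suc padded_Suc by simp
  next
    case False
    then obtain P Q y where f: "factorisation n m D P y Q"
      and y: "y = uu n (Suc m) \<or> 2 \<le> Suc m \<and> (y = gg n m \<or> y = ee n m)"
      and h: "\<not> has_horizontal D \<longrightarrow> \<not> has_horizontal P \<and> \<not> has_horizontal Q \<and> \<not> has_horizontal y"
      using factor_column[OF Suc.prems(2) _ Suc.prems(1)] by auto
    have m: "m \<le> n" using Suc.prems(1) by simp
    have "basis P \<in> subalg x n G" "basis Q \<in> subalg x n G"
      using Suc.IH[OF m] f h Suc.prems(3) unfolding factorisation_def by auto
    moreover have "basis y \<in> subalg x n G"
      using y
    proof (elim disjE conjE)
      assume "y = gg n m" "2 \<le> Suc m"
      then show ?thesis using gg_eq[of m n] perm_diagram_in_subalg[OF perms perm_pair_transpose] Suc.prems(1)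
        by simp
    next
      assume "y = ee n m" "2 \<le> Suc m"
      then show ?thesis using e Suc.prems h ee_has_horizontal by auto
    qed (use uu_in_subalg[OF perms u] Suc.prems(1) in auto)
    ultimately show ?thesis using factorisation_in_subalg[OF f] by blast
  qed
qed

lemma subalg_eq_alg:
  fixes x :: "'k::field"
  assumes n: "2 \<le> n"
  shows "subalg x n (basis ` perms n \<union> {basis (ee n (n - 1)), basis (uu n n)}) = alg n"
    (is "subalg x n ?G = _")
proof
  have "?G \<subseteq> alg n"
    using basis_alg ee_rb uu_rb n unfolding perms_def by auto
  then show "subalg x n ?G \<subseteq> alg n" using subalg_alg by blast
  have "basis (ee n p) \<in> subalg x n ?G" if "1 \<le> p" "p + 1 \<le> n" for p
    using ee_in_subalg[of n ?G] that by auto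
  then have basis: "basis D \<in> subalg x n ?G" if "D \<in> rb n" for D
    using padded_in_subalg[of n ?G False, OF _ _ _ order_refl padded_self[OF that]] by auto
  show "alg n \<subseteq> subalg x n ?G"
  proof
    fix f :: "diagram \<Rightarrow> 'k" assume "f \<in> alg n"
    then show "f \<in> subalg x n ?G" by (intro expansion_in_subalg[OF finite_rb basis]) (auto simp: alg_def)
  qed
qed

lemma subalg_eq_lalg:
  fixes x :: "'k::field"
  shows "subalg x n (basis ` perms n \<union> {basis (uu n n)}) = lalg n" (is "subalg x n ?G = _")
proof
  have "?G \<subseteq> lalg n"
    using basis_lalg perms_no_horizontal uu_rb uu_no_horizontal unfolding perms_def by auto
  then show "subalg x n ?G \<subseteq> lalg n" using subalg_lalg by blast
  have basis: "basis D \<in> subalg x n ?G" if "D \<in> rb n" "\<not> has_horizontal D" for D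
    using padded_in_subalg[of n ?G True, OF _ _ _ order_refl padded_self[OF that(1)]] that(2) by auto
  show "lalg n \<subseteq> subalg x n ?G"
  proof
    fix f :: "diagram \<Rightarrow> 'k" assume f: "f \<in> lalg n"
    show "f \<in> subalg x n ?G"
    proof (rule expansion_in_subalg[of "{D \<in> rb n. \<not> has_horizontal D}"])
      show "finite {D \<in> rb n. \<not> has_horizontal D}" using finite_rb by simp
    qed (use basis f in \<open>auto simp: lalg_def alg_def has_horizontal_def\<close>)
  qed
qed

lemma verts_pred: "u \<in> verts n \<Longrightarrow> u \<noteq> T n \<Longrightarrow> u \<noteq> B n \<Longrightarrow> u \<in> verts (n - 1)"
  by (cases u) auto

lemma eps_strip: assumes n: "1 \<le> n" and P: "P \<in> padded (n - 1) n"
  shows "P - {{T n, B n}} \<in> rb (n - 1)" "eps n (P - {{T n, B n}}) = P"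
proof -
  have Prb: "P \<in> rb n" using padded_rb[OF P] .
  have pT: "partner P (T n) = B n" using paddedD[OF P] n by simp
  have pB: "partner P (B n) = T n" using partner_partner[OF Prb, of "T n"] pT by simp
  have mem: "{T n, B n} \<in> P" using partner_arc[OF Prb, of "T n"] pT by simp
  show "eps n (P - {{T n, B n}}) = P" unfolding eps_def using mem by auto
  have A: "\<forall>e\<in>P - {{T n, B n}}. \<exists>u v. u \<in> verts (n - 1) \<and> v \<in> verts (n - 1) \<and> u \<noteq> v \<and> e = {u, v}"
  proof
    fix e assume e: "e \<in> P - {{T n, B n}}"
    obtain u v where uv: "u \<in> verts n" "v \<in> verts n" "u \<noteq> v" "e = {u, v}" using rb_arcD[OF Prb] e by blast
    have pu: "partner P u = v" using partner_eqI[OF Prb, of u v] e uv by simp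
    have pv: "partner P v = u" using partner_eqI[OF Prb, of v u] e uv by (simp add: insert_commute)
    have "u \<noteq> T n" using pu pT e uv by auto
    moreover have "u \<noteq> B n" using pu pB e uv by (auto simp: insert_commute)
    moreover have "v \<noteq> T n" using pv pT e uv by (auto simp: insert_commute)
    moreover have "v \<noteq> B n" using pv pB e uv by auto
    ultimately show "\<exists>u v. u \<in> verts (n - 1) \<and> v \<in> verts (n - 1) \<and> u \<noteq> v \<and> e = {u, v}"
      using verts_pred uv by blast
  qed
  have Bd: "\<forall>e\<in>P - {{T n, B n}}. \<forall>e'\<in>P - {{T n, B n}}. e \<noteq> e' \<longrightarrow> e \<inter> e' = {}"
    using rb_arcs_disjoint[OF Prb] by blast
  show "P - {{T n, B n}} \<in> rb (n - 1)" unfolding rb_def using A Bd by blast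
qed

lemma rb_decomposition:
  assumes n: "2 \<le> n" and a: "a \<in> rb n"
  shows "(\<exists>a0\<in>rb (n - 1). a = eps n a0)
       \<or> (\<exists>a'\<in>rb (n - 1). \<exists>b'\<in>rb (n - 1). \<exists>y\<in>{gg n (n - 1), ee n (n - 1), uu n n}.
            (basis a :: diagram \<Rightarrow> 'k::field) =
              mult x n (mult x n (basis (eps n a')) (basis y)) (basis (eps n b')))"
proof (cases "partner a (T n) = B n")
  case True
  then have "a \<in> padded (n - 1) n" using padded_Suc[of a "n - 1"] padded_self[OF a] n by simp
  then show ?thesis using eps_strip n by (metis One_nat_def Suc_1 Suc_leD)
next
  case False
  then obtain P Q y where f: "factorisation n (n - 1) a P y Q"
    and y: "y \<in> {gg n (n - 1), ee n (n - 1), uu n n}"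
    using factor_column[OF padded_self[OF a]] n by fastforce
  then have "(basis a :: diagram \<Rightarrow> 'k) = mult x n (mult x n (basis P) (basis y)) (basis Q)"
    using mult_basis_triple padded_rb unfolding factorisation_def by metis
  moreover have "P - {{T n, B n}} \<in> rb (n - 1)" "eps n (P - {{T n, B n}}) = P"
    "Q - {{T n, B n}} \<in> rb (n - 1)" "eps n (Q - {{T n, B n}}) = Q"
    using eps_strip f n unfolding factorisation_def by auto
  ultimately show ?thesis using y by metis
qed

theorem lemma3p1:
  fixes x :: "'k::field" and n :: nat
  assumes "n \<ge> 2"
  shows "(\<forall>a\<in>rb n.
            (\<exists>a0\<in>rb (n - 1). a = eps n a0)
          \<or> (\<exists>a'\<in>rb (n - 1). \<exists>b'\<in>rb (n - 1). \<exists>y\<in>{gg n (n - 1), ee n (n - 1), uu n n}.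
               (basis a :: diagram \<Rightarrow> 'k) =
                 mult x n (mult x n (basis (eps n a')) (basis y)) (basis (eps n b'))))
       \<and> subalg x n ((\<lambda>D. basis D) ` perms n \<union> {basis (ee n (n - 1)), basis (uu n n)}) = alg n
       \<and> subalg x n ((\<lambda>D. basis D) ` perms n \<union> {basis (uu n n)}) = lalg n"
  using rb_decomposition[OF assms] subalg_eq_alg[OF assms] subalg_eq_lalg by blast

end
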